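(* Let $n\ge2$. Let $u:\mathbb R\times(0,\infty)\to\mathbb R$ be twice continuously differentiable in $x$ and continuously differentiable in $t$, with $\partial_tu-\partial_x^2u=0$ on $\mathbb R\times(0,\infty)$. Suppose $u(\cdot,t)\in\mathcal A_c^n$ for each $t>0$, $\|u(\cdot,t)\|^{(n)}$ is bounded for $t\in(0,\infty)$, and $\lim_{t\to0^+}\|u(\cdot,t)-f\|^{(n)}=0$ for some $f\in\mathcal A_c^n$. Then $u(x,t)=f\ast\Theta_t(x)$ for all $(x,t)\in\mathbb R\times(0,\infty)$; i.e., $f\ast\Theta_t$ is the unique solution with these properties.
   Context: Let $\mathcal B_c$ be the set of continuous $F:\mathbb R\to\mathbb R$ such that $\lim_{x\to\pm\infty}F(x)$ exist as real numbers and $\lim_{x\to-\infty}F(x)=0$. $\mathcal A_c$ is the set of distributions $F'$ with $F\in\mathcal B_c$, with integral $\int_a^bF'=F(b)-F(a)$ and, for $g$ of bounded variation, $\int_{-\infty}^\infty F'g:=F(\infty)g(\infty)-\int F\,dg$ (Henstock–Stieltjes). For $n\in\mathbb N$, $\mathcal A_c^n$ is the set of distributions $f=F^{(n)}$ (distributional derivative) for some $F\in\mathcal B_c$; this $F$ is unique, and $\|f\|^{(n)}:=\sup_{x<y}|F(x)-F(y)|$. For $f\in\mathcal A_c^n$ with primitive $F$, $f\ast\Theta_t(x):=\int_{-\infty}^\infty F'(\xi)\Theta_t^{(n-1)}(x-\xi)\,d\xi$ (integral in $\mathcal A_c$), where $\Theta_t(x)=(4\pi t)^{-1/2}e^{-x^2/(4t)}$,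 $t>0$, and $\Theta_t^{(k)}$ is its $k$th $x$-derivative. *)

theory Defs
  imports "HOL-Analysis.Analysis"
begin

definition Bc :: "(real \<Rightarrow> real) \<Rightarrow> bool" where
  "Bc F \<longleftrightarrow> continuous_on UNIV F \<and> (F \<longlongrightarrow> 0) at_bot \<and> (\<exists>L. (F \<longlongrightarrow> L) at_top)"

definition test_fun :: "(real \<Rightarrow> real) \<Rightarrow> bool" where
  "test_fun \<phi> \<longleftrightarrow> (\<forall>k x. ((deriv ^^ k) \<phi>) differentiable (at x)) \<and>
                   (\<exists>a b. \<forall>x. x \<notin> {a..b} \<longrightarrow> \<phi> x = 0)"

definition distr_deriv :: "nat \<Rightarrow> (real \<Rightarrow> real) \<Rightarrow> (real \<Rightarrow> real) \<Rightarrow> bool" where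
  "distr_deriv n F g \<longleftrightarrow> (\<forall>\<phi>. test_fun \<phi> \<longrightarrow>
      integral UNIV (\<lambda>x. g x * \<phi> x) = (-1) ^ n * integral UNIV (\<lambda>x. F x * (deriv ^^ n) \<phi> x))"

text \<open>The norm of f = F^(n) in A_c^n, expressed through its (unique) primitive F in B_c.\<close>
definition Acn_norm :: "(real \<Rightarrow> real) \<Rightarrow> real" where
  "Acn_norm F = (SUP p \<in> {p :: real \<times> real. fst p < snd p}. \<bar>F (fst p) - F (snd p)\<bar>)"

definition heat_kernel :: "real \<Rightarrow> real \<Rightarrow> real" where
  "heat_kernel t x = exp (- (x ^ 2) / (4 * t)) / sqrt (4 * pi * t)"

text \<open>f * Theta_t (x) for f = F^(n), F in B_c:
  the A_c integral of F' against g(xi) = Theta_t^(n-1)(x - xi), i.e.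
  F(infinity) g(infinity) - int F dg, with the Stieltjes integral against the smooth g
  written as int F(xi) g'(xi) d xi.\<close>
definition heat_conv :: "nat \<Rightarrow> (real \<Rightarrow> real) \<Rightarrow> real \<Rightarrow> real \<Rightarrow> real" where
  "heat_conv n F t x =
     (let g = (\<lambda>\<xi>. (deriv ^^ (n - 1)) (heat_kernel t) (x - \<xi>))
      in Lim at_top F * Lim at_top g - integral UNIV (\<lambda>\<xi>. F \<xi> * deriv g \<xi>))"

end

theory Submission
  imports Defs "HOL-Computational_Algebra.Polynomial" "HOL-Probability.Distributions" "HOL-Real_Asymp.Real_Asymp"
begin

text \<open>Fix \<open>(x0, t0)\<close> and pair the solution at time \<open>s < t0\<close> with the backward heat kernel,
  \<open>\<Phi>(s) = \<integral> P(s, \<xi>) \<partial>\<^sup>n\<Theta>(t0 - s, x0 - \<xi>) d\<xi>\<close>, which is \<open>\<langle>u(\<cdot>, s), \<Theta>(t0 - s, x0 - \<cdot>)\<rangle>\<close>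
  in the sense of distributions. Truncating the kernel smoothly to \<open>\<bar>\<xi> - x0\<bar> \<le> R + 1\<close> gives a
  genuine test function; by the heat equation and two integrations by parts, the \<open>s\<close>-derivative of
  the truncated pairing only sees the region \<open>\<bar>\<xi> - x0\<bar> \<ge> R\<close>, where the kernel is
  \<open>O(exp (- R\<^sup>2 / (16 (t0 - s))))\<close>. As \<open>\<parallel>P(s)\<parallel>\<close> stays bounded, letting \<open>R \<rightarrow> \<infinity>\<close> shows that \<open>\<Phi>\<close>
  is constant on \<open>(0, t0)\<close>. For \<open>s \<rightarrow> t0\<close> the kernel concentrates at \<open>x0\<close> and \<open>\<Phi>(s) \<rightarrow> u(x0, t0)\<close>;
  for \<open>s \<rightarrow> 0\<close> the convergence \<open>P(s) \<rightarrow> G\<close> in sup norm gives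
  \<open>\<Phi>(s) \<rightarrow> \<integral> G(\<xi>) \<partial>\<^sup>n\<Theta>(t0, x0 - \<xi>) d\<xi> = (f * \<Theta>\<^sub>t\<^sub>0)(x0)\<close>.\<close>

section \<open>Smooth functions with explicitly known derivatives\<close>

definition has_derivs :: "(real \<Rightarrow> real) \<Rightarrow> (nat \<Rightarrow> real \<Rightarrow> real) \<Rightarrow> bool" where
  "has_derivs f D \<longleftrightarrow> D 0 = f \<and> (\<forall>k x. (D k has_real_derivative D (Suc k) x) (at x))"

lemma has_derivs_0: "has_derivs f D \<Longrightarrow> D 0 = f"
  by (simp add: has_derivs_def)

lemma has_derivs_DERIV: "has_derivs f D \<Longrightarrow> (D k has_real_derivative D (Suc k) x) (at x)"
  by (simp add: has_derivs_def)

lemma has_derivs_funpow_deriv: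
  assumes "has_derivs f D"
  shows "(deriv ^^ k) f = D k"
proof (induction k)
  case 0
  then show ?case using assms by (simp add: has_derivs_def)
next
  case (Suc k)
  then show ?case using assms by (auto intro!: ext DERIV_imp_deriv simp: has_derivs_def)
qed

lemma has_derivs_continuous_on:
  assumes "has_derivs f D"
  shows "continuous_on S (D k)"
  using DERIV_isCont[OF has_derivs_DERIV[OF assms]] by (simp add: continuous_at_imp_continuous_on)

lemma has_derivs_shift: "has_derivs f D \<Longrightarrow> has_derivs (D m) (\<lambda>k. D (m + k))"
  by (simp add: has_derivs_def)

lemma test_fun_if_has_derivs:
  assumes "has_derivs f D" and "\<And>x. x \<notin> {a..b} \<Longrightarrow> f x = 0"
  shows "test_fun f"
  unfolding test_fun_def
proof (intro conjI allI)
  fix k x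
  show "(deriv ^^ k) f differentiable at x"
    unfolding has_derivs_funpow_deriv[OF assms(1)]
    using has_derivs_DERIV[OF assms(1)] real_differentiable_def by blast
  show "\<exists>a b. \<forall>x. x \<notin> {a..b} \<longrightarrow> f x = 0"
    using assms(2) by blast
qed

lemma has_derivs_const: "has_derivs (\<lambda>x. c) (\<lambda>k x. if k = 0 then c else 0)"
  by (auto simp: has_derivs_def intro!: derivative_eq_intros)

lemma has_derivs_diff:
  "has_derivs f F \<Longrightarrow> has_derivs g G \<Longrightarrow> has_derivs (\<lambda>x. f x - g x) (\<lambda>k x. F k x - G k x)"
  by (auto simp: has_derivs_def intro!: derivative_eq_intros)

lemma has_derivs_cmult: "has_derivs f F \<Longrightarrow> has_derivs (\<lambda>x. c * f x) (\<lambda>k x. c * F k x)"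
  by (auto simp: has_derivs_def intro!: derivative_eq_intros)

lemma has_derivs_affine:
  assumes "has_derivs f F"
  shows "has_derivs (\<lambda>x. f (a * x + b)) (\<lambda>k x. a ^ k * F k (a * x + b))"
  unfolding has_derivs_def
proof (intro conjI allI)
  show "(\<lambda>x. a ^ 0 * F 0 (a * x + b)) = (\<lambda>x. f (a * x + b))"
    using assms by (simp add: has_derivs_def)
  fix k x
  have "((\<lambda>x. F k (a * x + b)) has_real_derivative F (Suc k) (a * x + b) * a) (at x)"
    by (rule DERIV_chain2[OF has_derivs_DERIV[OF assms]]) (auto intro!: derivative_eq_intros)
  then show "((\<lambda>x. a ^ k * F k (a * x + b)) has_real_derivative a ^ Suc k * F (Suc k) (a * x + b)) (at x)"
    by (auto intro!: derivative_eq_intros simp: algebra_simps)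
qed

lemma Leibniz_sum_Suc:
  fixes F G :: "nat \<Rightarrow> real"
  shows "(\<Sum>i = 0..n. real (n choose i) * (F (Suc i) * G (n - i) + F i * G (Suc (n - i)))) =
         (\<Sum>i = 0..Suc n. real (Suc n choose i) * F i * G (Suc n - i))"
proof -
  have shift: "(\<Sum>i = 0..Suc n. real (m choose i) * F i * G (Suc n - i)) =
      F 0 * G (Suc n) + (\<Sum>i = 0..n. real (m choose Suc i) * F (Suc i) * G (n - i))" for m
    by (subst sum.atLeast0_atMost_Suc_shift) simp
  have "(\<Sum>i = 0..n. real (n choose i) * F i * G (Suc (n - i))) =
      (\<Sum>i = 0..Suc n. real (n choose i) * F i * G (Suc n - i))"
    by (auto simp: sum.atLeast0_atMost_Suc Suc_diff_le intro!: sum.cong)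
  then show ?thesis
    unfolding shift[of n] shift[of "Suc n"]
    by (simp add: sum.distrib algebra_simps)
qed

lemma has_derivs_mult:
  assumes f: "has_derivs f F" and g: "has_derivs g G"
  shows "has_derivs (\<lambda>x. f x * g x) (\<lambda>k x. \<Sum>i = 0..k. real (k choose i) * F i x * G (k - i) x)"
  unfolding has_derivs_def
proof (intro conjI allI)
  show "(\<lambda>x. \<Sum>i = 0..0. real (0 choose i) * F i x * G (0 - i) x) = (\<lambda>x. f x * g x)"
    using f g by (simp add: has_derivs_def)
  fix k x
  have "((\<lambda>x. \<Sum>i = 0..k. real (k choose i) * F i x * G (k - i) x) has_real_derivative
     (\<Sum>i = 0..k. real (k choose i) * (F (Suc i) x * G (k - i) x + F i x * G (Suc (k - i)) x))) (at x)"
    using has_derivs_DERIV[OF f] has_derivs_DERIV[OF g]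
    by (auto intro!: DERIV_sum derivative_eq_intros simp: algebra_simps)
  then show "((\<lambda>x. \<Sum>i = 0..k. real (k choose i) * F i x * G (k - i) x) has_real_derivative
     (\<Sum>i = 0..Suc k. real (Suc k choose i) * F i x * G (Suc k - i) x)) (at x)"
    using Leibniz_sum_Suc[of k "\<lambda>i. F i x" "\<lambda>i. G i x"] by simp
qed

lemma has_derivs_zero_on_open:
  assumes "has_derivs f D" "open S" "x \<in> S" "\<And>y. y \<in> S \<Longrightarrow> f y = 0"
  shows "D 1 x = 0"
proof -
  have "(D 0 has_real_derivative 0) (at x)"
    by (rule has_field_derivative_transform_within_open[OF DERIV_const assms(2,3)])
       (use assms(4) has_derivs_0[OF assms(1)] in auto)
  then show ?thesis
    using DERIV_unique has_derivs_DERIV[OF assms(1), of 0 x] by fastforce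
qed

lemma integral_UNIV_eq_on_support:
  fixes f :: "real \<Rightarrow> real"
  assumes "\<And>x. x \<notin> S \<Longrightarrow> f x = 0"
  shows "integral UNIV f = integral S f"
proof -
  have "f = (\<lambda>x. if x \<in> S then f x else 0)"
    using assms by auto
  then show ?thesis
    by (metis integral_restrict_UNIV)
qed

lemma integral_by_parts_twice:
  fixes g g' g'' \<phi> :: "real \<Rightarrow> real"
  assumes g: "\<And>x. (g has_real_derivative g' x) (at x)" "\<And>x. (g' has_real_derivative g'' x) (at x)"
      "continuous_on UNIV g''"
    and \<phi>: "has_derivs \<phi> D" "\<And>x. x \<notin> {c..d} \<Longrightarrow> \<phi> x = 0"
    and ab: "a < c" "c \<le> d" "d < b"
  shows "integral {a..b} (\<lambda>x. g'' x * \<phi> x) = integral {a..b} (\<lambda>x. g x * D 2 x)"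
proof -
  define H where "H x = g' x * \<phi> x - g x * D 1 x" for x
  have D: "(\<phi> has_real_derivative D 1 x) (at x)" "(D 1 has_real_derivative D 2 x) (at x)" for x
    using has_derivs_DERIV[OF \<phi>(1), of 0 x] has_derivs_DERIV[OF \<phi>(1), of 1 x] has_derivs_0[OF \<phi>(1)]
    by (simp_all add: numeral_2_eq_2)
  have "(H has_real_derivative (g'' x * \<phi> x + D 1 x * g' x) - (g' x * D 1 x + D 2 x * g x)) (at x)" for x
    unfolding H_def[abs_def] by (intro DERIV_diff DERIV_mult g D)
  then have "((\<lambda>x. g'' x * \<phi> x - g x * D 2 x) has_integral H b - H a) {a..b}"
    using ab
    by (intro fundamental_theorem_of_calculus)
       (auto simp: algebra_simps has_real_derivative_iff_has_vector_derivative intro: has_vector_derivative_at_within)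
  moreover have "H a = 0"
    using has_derivs_zero_on_open[OF \<phi>(1), of "{..<c}" a] \<phi>(2) ab by (simp add: H_def)
  moreover have "H b = 0"
    using has_derivs_zero_on_open[OF \<phi>(1), of "{d<..}" b] \<phi>(2) ab by (simp add: H_def)
  moreover have "continuous_on {a..b} g" "continuous_on {a..b} \<phi>"
    using DERIV_isCont[OF g(1)] DERIV_isCont[OF D(1)] by (simp_all add: continuous_at_imp_continuous_on)
  then have "integral {a..b} (\<lambda>x. g'' x * \<phi> x - g x * D 2 x) =
      integral {a..b} (\<lambda>x. g'' x * \<phi> x) - integral {a..b} (\<lambda>x. g x * D 2 x)"
    by (intro integral_diff integrable_continuous_interval continuous_intros continuous_on_subset[OF g(3)]
        has_derivs_continuous_on[OF \<phi>(1)]; simp)+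
  ultimately show ?thesis
    by (simp add: integral_unique)
qed

lemma continuous_on_slice:
  assumes "continuous_on (UNIV \<times> {0<..}) (\<lambda>(x, t). w x t)" "t > 0"
  shows "continuous_on S (\<lambda>x. w x t)"
proof -
  have "continuous_on S ((\<lambda>(x, t). w x t) \<circ> (\<lambda>x. (x, t)))"
    using assms by (intro continuous_on_compose continuous_intros continuous_on_subset[OF assms(1)]) auto
  then show ?thesis by (simp add: o_def)
qed

text \<open>On a compact box around \<open>(x, t)\<close> the partial derivatives are bounded, so \<open>f\<close> is
  Lipschitz there.\<close>

lemma continuous_on_half_plane_if_partials:
  fixes f fx ft :: "real \<Rightarrow> real \<Rightarrow> real"
  assumes fx: "\<And>x t. t > 0 \<Longrightarrow> ((\<lambda>y. f y t) has_real_derivative fx x t) (at x)"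
    and ft: "\<And>x t. t > 0 \<Longrightarrow> ((\<lambda>s. f x s) has_real_derivative ft x t) (at t)"
    and cont: "continuous_on (UNIV \<times> {0<..}) (\<lambda>(x, t). fx x t)" "continuous_on (UNIV \<times> {0<..}) (\<lambda>(x, t). ft x t)"
  shows "continuous_on (UNIV \<times> {0<..}) (\<lambda>(x, t). f x t)"
  unfolding continuous_on_iff
proof (intro ballI allI impI)
  fix p :: "real \<times> real" and e :: real
  assume "p \<in> UNIV \<times> {0<..}" "e > 0"
  then obtain x t where p: "p = (x, t)" and "t > 0" by auto
  define K where "K = cbox (x - 1, t / 2) (x + 1, 2 * t)"
  have "compact K"
    unfolding K_def by (rule compact_cbox)
  moreover have "K \<subseteq> UNIV \<times> {0<..}"
    unfolding K_def using \<open>t > 0\<close> by (auto simp: cbox_Pair_eq)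
  ultimately have K: "compact K" "K \<subseteq> UNIV \<times> {0<..}" .
  have inK: "(y, s) \<in> K" if "\<bar>y - x\<bar> \<le> 1" "t / 2 \<le> s" "s \<le> 2 * t" for y s
    using that by (auto simp: K_def cbox_Pair_eq)
  obtain B1 where "B1 \<ge> 0" and B1: "\<And>q. q \<in> K \<Longrightarrow> norm ((\<lambda>(x, t). fx x t) q) \<le> B1"
    using continuous_on_compact_bound[OF K(1) continuous_on_subset[OF cont(1) K(2)]] by blast
  obtain B2 where "B2 \<ge> 0" and B2: "\<And>q. q \<in> K \<Longrightarrow> norm ((\<lambda>(x, t). ft x t) q) \<le> B2"
    using continuous_on_compact_bound[OF K(1) continuous_on_subset[OF cont(2) K(2)]] by blast
  define d where "d = min (min 1 (t / 2)) (e / (B1 + B2 + 1))"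
  have "(B1 + B2 + 1) * d \<le> (B1 + B2 + 1) * (e / (B1 + B2 + 1))"
    using \<open>B1 \<ge> 0\<close> \<open>B2 \<ge> 0\<close> by (intro mult_left_mono) (auto simp: d_def)
  moreover have "d > 0"
    using \<open>t > 0\<close> \<open>e > 0\<close> \<open>B1 \<ge> 0\<close> \<open>B2 \<ge> 0\<close> by (simp add: d_def)
  moreover have "d \<le> 1" "d \<le> t / 2"
    unfolding d_def by linarith+
  ultimately have d: "d > 0" "d \<le> 1" "d \<le> t / 2" "(B1 + B2 + 1) * d \<le> e"
    using \<open>B1 \<ge> 0\<close> \<open>B2 \<ge> 0\<close> by simp_all
  have close: "dist (f y s) (f x t) < e" if "s > 0" "dist (y, s) (x, t) < d" for y s
  proof -
    have ys: "\<bar>y - x\<bar> < d" "\<bar>s - t\<bar> < d"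
      using that(2) dist_fst_le[of "(y, s)" "(x, t)"] dist_snd_le[of "(y, s)" "(x, t)"]
      by (auto simp: dist_real_def)
    have "\<bar>f y s - f x s\<bar> \<le> B1 * \<bar>y - x\<bar>"
    proof (rule field_differentiable_bound[where S = "closed_segment x y", unfolded real_norm_def])
      fix z assume "z \<in> closed_segment x y"
      then have "\<bar>z - x\<bar> \<le> \<bar>x - y\<bar>"
        using dist_in_closed_segment[of z x y] by (simp add: dist_real_def)
      then have "\<bar>z - x\<bar> \<le> 1" "t / 2 \<le> s" "s \<le> 2 * t"
        using ys d by linarith+
      then show "\<bar>fx z s\<bar> \<le> B1"
        using B1[OF inK] by simp
      show "((\<lambda>z. f z s) has_field_derivative fx z s) (at z within closed_segment x y)"
        by (rule has_field_derivative_at_within[OF fx[OF that(1)]])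
    qed simp_all
    moreover have "\<bar>f x s - f x t\<bar> \<le> B2 * \<bar>s - t\<bar>"
    proof (rule field_differentiable_bound[where S = "closed_segment t s", unfolded real_norm_def])
      fix r assume "r \<in> closed_segment t s"
      then have "\<bar>r - t\<bar> \<le> \<bar>t - s\<bar>"
        using dist_in_closed_segment[of r t s] by (simp add: dist_real_def)
      then have "t / 2 \<le> r" "r \<le> 2 * t"
        using ys d by linarith+
      then show "\<bar>ft x r\<bar> \<le> B2"
        using B2[OF inK] by simp
      show "((\<lambda>r. f x r) has_field_derivative ft x r) (at r within closed_segment t s)"
        using \<open>t / 2 \<le> r\<close> \<open>t > 0\<close> by (intro has_field_derivative_at_within[OF ft]) simp
    qed simp_all
    moreover have "B1 * \<bar>y - x\<bar> + B2 * \<bar>s - t\<bar> \<le> B1 * d + B2 * d"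
      using ys \<open>B1 \<ge> 0\<close> \<open>B2 \<ge> 0\<close> by (intro add_mono mult_left_mono) auto
    ultimately have "\<bar>f y s - f x t\<bar> < (B1 + B2 + 1) * d"
      using d(1) by (simp add: algebra_simps)
    then show ?thesis
      using d(4) by (simp add: dist_real_def)
  qed
  show "\<exists>d>0. \<forall>q\<in>UNIV \<times> {0<..}. dist q p < d \<longrightarrow> dist ((\<lambda>(x, t). f x t) q) ((\<lambda>(x, t). f x t) p) < e"
  proof (intro exI[of _ d] conjI ballI impI)
    fix q
    assume "q \<in> UNIV \<times> {0<..}" "dist q p < d"
    then show "dist ((\<lambda>(x, t). f x t) q) ((\<lambda>(x, t). f x t) p) < e"
      using close[of "snd q" "fst q"] by (cases q) (simp add: p)
  qed (rule d(1))
qed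

section \<open>A smooth cut-off function\<close>

lemma poly_times_exp_minus_tendsto_0: "((\<lambda>y::real. poly q y * exp (- y)) \<longlongrightarrow> 0) at_top"
proof -
  have "((\<lambda>y::real. \<Sum>i\<le>degree q. coeff q i * (y ^ i / exp y)) \<longlongrightarrow> (\<Sum>i\<le>degree q. coeff q i * 0)) at_top"
    by (intro tendsto_intros tendsto_power_div_exp_0)
  moreover have "(\<Sum>i\<le>degree q. coeff q i * (y ^ i / exp y)) = poly q y * exp (- y)" for y
    by (simp add: poly_altdef sum_distrib_right exp_minus divide_inverse mult.assoc)
  ultimately show ?thesis by simp
qed

fun exp_recip_poly :: "nat \<Rightarrow> real poly" where
  "exp_recip_poly 0 = 1"
| "exp_recip_poly (Suc k) = [:0, 0, 1:] * (exp_recip_poly k - pderiv (exp_recip_poly k))"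

definition exp_recip_deriv :: "nat \<Rightarrow> real \<Rightarrow> real" where
  "exp_recip_deriv k x = (if x > 0 then poly (exp_recip_poly k) (1 / x) * exp (- (1 / x)) else 0)"

lemma exp_recip_deriv_nonpos: "x \<le> 0 \<Longrightarrow> exp_recip_deriv k x = 0"
  by (simp add: exp_recip_deriv_def)

lemma DERIV_exp_recip_deriv_pos:
  assumes "x > 0"
  shows "(exp_recip_deriv k has_real_derivative exp_recip_deriv (Suc k) x) (at x)"
proof -
  let ?p = "exp_recip_poly k"
  have "((\<lambda>y. poly ?p (1 / y)) has_real_derivative poly (pderiv ?p) (1 / x) * (- 1 / x ^ 2)) (at x)"
    by (rule DERIV_chain2[OF poly_DERIV])
       (use assms in \<open>auto intro!: derivative_eq_intros simp: power2_eq_square\<close>)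
  moreover have "((\<lambda>y. exp (- (1 / y))) has_real_derivative exp (- (1 / x)) * (1 / x ^ 2)) (at x)"
    using assms by (auto intro!: derivative_eq_intros simp: power2_eq_square)
  ultimately have "((\<lambda>y. poly ?p (1 / y) * exp (- (1 / y))) has_real_derivative
      poly (pderiv ?p) (1 / x) * (- 1 / x ^ 2) * exp (- (1 / x)) +
      exp (- (1 / x)) * (1 / x ^ 2) * poly ?p (1 / x)) (at x)"
    by (rule DERIV_mult)
  moreover have "poly (pderiv ?p) (1 / x) * (- 1 / x ^ 2) * exp (- (1 / x)) +
      exp (- (1 / x)) * (1 / x ^ 2) * poly ?p (1 / x) = exp_recip_deriv (Suc k) x"
    using assms by (simp add: exp_recip_deriv_def poly_mult algebra_simps power2_eq_square divide_simps)
  ultimately have "((\<lambda>y. poly ?p (1 / y) * exp (- (1 / y))) has_real_derivative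
      exp_recip_deriv (Suc k) x) (at x)"
    by simp
  then show ?thesis
    by (rule has_field_derivative_transform_within_open[where S = "{0<..}"])
       (use assms in \<open>auto simp: exp_recip_deriv_def\<close>)
qed

lemma DERIV_exp_recip_deriv_neg:
  assumes "x < 0"
  shows "(exp_recip_deriv k has_real_derivative exp_recip_deriv (Suc k) x) (at x)"
proof -
  have "(exp_recip_deriv k has_real_derivative 0) (at x)"
    by (rule has_field_derivative_transform_within_open[OF DERIV_const, where S = "{..<0}"])
       (use assms in \<open>auto simp: exp_recip_deriv_def\<close>)
  then show ?thesis using assms by (simp add: exp_recip_deriv_def)
qed

text \<open>At the origin the difference quotient is \<open>p\<^sub>k(y) * y * exp (- y)\<close> with \<open>y = 1 / x\<close>.\<close>

lemma DERIV_exp_recip_deriv_0: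
  "(exp_recip_deriv k has_real_derivative exp_recip_deriv (Suc k) 0) (at 0)"
proof -
  let ?q = "\<lambda>y. (exp_recip_deriv k y - exp_recip_deriv k 0) / (y - 0)"
  have "(?q \<longlongrightarrow> 0) (at (0::real))"
  proof (rule filterlim_split_at)
    have "eventually (\<lambda>y. 0 = ?q y) (at_left (0::real))"
      unfolding eventually_at_left_field by (rule exI[of _ "-1"]) (auto simp: exp_recip_deriv_def)
    then show "(?q \<longlongrightarrow> 0) (at_left 0)"
      by (rule Lim_transform_eventually[OF tendsto_const])
  next
    have "eventually (\<lambda>y. poly (exp_recip_poly k * [:0,1:]) y * exp (- y) = ?q (inverse y)) at_top"
      using eventually_gt_at_top[of 0]
      by eventually_elim (auto simp: exp_recip_deriv_def poly_mult field_simps)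
    then have "((\<lambda>y. ?q (inverse y)) \<longlongrightarrow> 0) at_top"
      by (rule Lim_transform_eventually[OF poly_times_exp_minus_tendsto_0])
    then show "(?q \<longlongrightarrow> 0) (at_right 0)"
      by (simp add: filterlim_at_right_to_top)
  qed
  then show ?thesis
    by (simp add: has_field_derivative_iff exp_recip_deriv_def)
qed

lemma has_derivs_exp_recip: "has_derivs (exp_recip_deriv 0) exp_recip_deriv"
  unfolding has_derivs_def
proof (intro conjI allI refl)
  fix k and x :: real
  consider "x > 0" | "x < 0" | "x = 0" by linarith
  then show "(exp_recip_deriv k has_real_derivative exp_recip_deriv (Suc k) x) (at x)"
    by cases (auto intro: DERIV_exp_recip_deriv_pos DERIV_exp_recip_deriv_neg DERIV_exp_recip_deriv_0)
qed

definition bump_deriv :: "nat \<Rightarrow> real \<Rightarrow> real" where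
  "bump_deriv k x = (\<Sum>i = 0..k. real (k choose i) * exp_recip_deriv i x *
     ((-1) ^ (k - i) * exp_recip_deriv (k - i) (1 - x)))"

lemma has_derivs_bump: "has_derivs (\<lambda>x. exp_recip_deriv 0 x * exp_recip_deriv 0 (1 - x)) bump_deriv"
proof -
  have "has_derivs (\<lambda>x. exp_recip_deriv 0 ((-1) * x + 1))
      (\<lambda>k x. (-1) ^ k * exp_recip_deriv k ((-1) * x + 1))"
    by (rule has_derivs_affine[OF has_derivs_exp_recip])
  from has_derivs_mult[OF has_derivs_exp_recip this] show ?thesis
    unfolding bump_deriv_def by simp
qed

lemma bump_deriv_outside: "x \<le> 0 \<or> x \<ge> 1 \<Longrightarrow> bump_deriv k x = 0"
  by (auto simp: bump_deriv_def exp_recip_deriv_nonpos intro!: sum.neutral)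

lemma bump_deriv_continuous_on: "continuous_on S (bump_deriv k)"
  by (rule has_derivs_continuous_on[OF has_derivs_bump])

definition bump_mass :: real where
  "bump_mass = integral {-1..1} (bump_deriv 0)"

lemma bump_mass_pos: "bump_mass > 0"
proof -
  have bump: "bump_deriv 0 x = exp_recip_deriv 0 x * exp_recip_deriv 0 (1 - x)" for x
    using has_derivs_0[OF has_derivs_bump] by metis
  have nonneg: "0 \<le> bump_deriv 0 x" for x
    by (simp add: bump exp_recip_deriv_def)
  have int: "bump_deriv 0 integrable_on {-1..1}"
    by (intro integrable_continuous_interval bump_deriv_continuous_on)
  have "bump_mass \<ge> 0"
    unfolding bump_mass_def using nonneg int by (simp add: integral_nonneg)
  moreover have "bump_mass \<noteq> 0"
  proof
    assume "bump_mass = 0"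
    then have "(bump_deriv 0 has_integral 0) (cbox (-1) 1)"
      using int unfolding bump_mass_def by (simp add: has_integral_integral)
    then have "bump_deriv 0 (1/2) = 0"
      by (intro has_integral_0_cbox_imp_0[OF _ _ _ _, of "-1" 1 "bump_deriv 0"])
         (auto intro: bump_deriv_continuous_on nonneg)
    moreover have "bump_deriv 0 (1/2) > 0"
      by (simp add: bump exp_recip_deriv_def)
    ultimately show False by simp
  qed
  ultimately show ?thesis by simp
qed

definition smooth_step :: "real \<Rightarrow> real" where
  "smooth_step x = integral {-1..x} (bump_deriv 0) / bump_mass"

definition smooth_step_deriv :: "nat \<Rightarrow> real \<Rightarrow> real" where
  "smooth_step_deriv k x = (if k = 0 then smooth_step x else bump_deriv (k - 1) x / bump_mass)"

lemma smooth_step_nonpos: "x \<le> 0 \<Longrightarrow> smooth_step x = 0"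
proof -
  assume "x \<le> 0"
  then have "integral {-1..x} (bump_deriv 0) = integral {-1..x} (\<lambda>_. 0)"
    by (intro integral_cong) (auto simp: bump_deriv_outside)
  then show ?thesis by (simp add: smooth_step_def)
qed

lemma smooth_step_ge_1: "x \<ge> 1 \<Longrightarrow> smooth_step x = 1"
proof -
  assume x: "x \<ge> 1"
  have "bump_deriv 0 integrable_on {-1..x}"
    by (intro integrable_continuous_interval bump_deriv_continuous_on)
  then have "integral {-1..1} (bump_deriv 0) + integral {1..x} (bump_deriv 0) = integral {-1..x} (bump_deriv 0)"
    using x by (intro Henstock_Kurzweil_Integration.integral_combine) auto
  moreover have "integral {1..x} (bump_deriv 0) = integral {1..x} (\<lambda>_. 0)"
    by (intro integral_cong) (auto simp: bump_deriv_outside)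
  ultimately show ?thesis
    using bump_mass_pos by (simp add: smooth_step_def bump_mass_def)
qed

lemma DERIV_smooth_step: "(smooth_step has_real_derivative bump_deriv 0 x / bump_mass) (at x)"
proof (cases "x < 0")
  case True
  have "(smooth_step has_real_derivative 0) (at x)"
    by (rule has_field_derivative_transform_within_open[OF DERIV_const, where S = "{..<0}"])
       (use True in \<open>auto simp: smooth_step_nonpos\<close>)
  then show ?thesis using True by (simp add: bump_deriv_outside)
next
  case False
  have "((\<lambda>y. integral {-1..y} (bump_deriv 0)) has_real_derivative bump_deriv 0 x) (at x within {-1..x+1})"
    by (rule integral_has_real_derivative) (use False in \<open>auto intro: bump_deriv_continuous_on\<close>)
  moreover have "at x within {-1..x+1} = at x"
    by (rule at_within_interior) (use False in auto)
  ultimately have "((\<lambda>y. integral {-1..y} (bump_deriv 0)) has_real_derivative bump_deriv 0 x) (at x)"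
    by simp
  then show ?thesis
    unfolding smooth_step_def using bump_mass_pos by (auto intro!: derivative_eq_intros)
qed

lemma has_derivs_smooth_step: "has_derivs smooth_step smooth_step_deriv"
  unfolding has_derivs_def
proof (intro conjI allI)
  show "smooth_step_deriv 0 = smooth_step"
    by (simp add: smooth_step_deriv_def fun_eq_iff)
  fix k x
  show "(smooth_step_deriv k has_real_derivative smooth_step_deriv (Suc k) x) (at x)"
  proof (cases k)
    case 0
    then show ?thesis
      using DERIV_smooth_step[of x] by (simp add: smooth_step_deriv_def[abs_def])
  next
    case (Suc m)
    have "((\<lambda>x. bump_deriv m x / bump_mass) has_real_derivative bump_deriv (Suc m) x / bump_mass) (at x)"
      using has_derivs_DERIV[OF has_derivs_bump] bump_mass_pos by (auto intro!: derivative_eq_intros)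
    then show ?thesis
      using Suc by (simp add: smooth_step_deriv_def[abs_def])
  qed
qed

lemma smooth_step_deriv_nonpos: "x \<le> 0 \<Longrightarrow> smooth_step_deriv k x = 0"
  by (auto simp: smooth_step_deriv_def bump_deriv_outside smooth_step_nonpos)

lemma smooth_step_deriv_ge_1: "x \<ge> 1 \<Longrightarrow> smooth_step_deriv k x = (if k = 0 then 1 else 0)"
  by (auto simp: smooth_step_deriv_def bump_deriv_outside smooth_step_ge_1)

lemma smooth_step_deriv_bounded: "\<exists>B. \<forall>x. \<bar>smooth_step_deriv k x\<bar> \<le> B"
proof -
  obtain B where B: "\<And>x. x \<in> {0..1} \<Longrightarrow> \<bar>smooth_step_deriv k x\<bar> \<le> B"
    using continuous_on_compact_bound[OF compact_Icc has_derivs_continuous_on[OF has_derivs_smooth_step]]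
    by (metis real_norm_def)
  have "\<bar>smooth_step_deriv k x\<bar> \<le> max B 1" for x
  proof (cases "x \<in> {0..1}")
    case True
    then show ?thesis using B by force
  next
    case False
    then have "x \<le> 0 \<or> x \<ge> 1" by auto
    then show ?thesis using smooth_step_deriv_nonpos smooth_step_deriv_ge_1 by auto
  qed
  then show ?thesis by blast
qed

definition cutoff :: "real \<Rightarrow> real \<Rightarrow> real \<Rightarrow> real" where
  "cutoff c R x = smooth_step (x - c + R + 1) * smooth_step (c + R + 1 - x)"

definition cutoff_deriv :: "real \<Rightarrow> real \<Rightarrow> nat \<Rightarrow> real \<Rightarrow> real" where
  "cutoff_deriv c R k x = (\<Sum>i = 0..k. real (k choose i) * smooth_step_deriv i (x - c + R + 1) *
     ((-1) ^ (k - i) * smooth_step_deriv (k - i) (c + R + 1 - x)))"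

lemma has_derivs_cutoff: "has_derivs (cutoff c R) (cutoff_deriv c R)"
proof -
  have "has_derivs (\<lambda>x. smooth_step (1 * x + (R + 1 - c))) (\<lambda>k x. 1 ^ k * smooth_step_deriv k (1 * x + (R + 1 - c)))"
   and "has_derivs (\<lambda>x. smooth_step ((-1) * x + (c + R + 1))) (\<lambda>k x. (-1) ^ k * smooth_step_deriv k ((-1) * x + (c + R + 1)))"
    by (rule has_derivs_affine[OF has_derivs_smooth_step])+
  from has_derivs_mult[OF this] show ?thesis
    unfolding cutoff_def cutoff_deriv_def by (simp add: algebra_simps)
qed

lemma cutoff_deriv_inner: "\<bar>x - c\<bar> \<le> R \<Longrightarrow> cutoff_deriv c R k x = (if k = 0 then 1 else 0)"
  by (cases "k = 0") (auto simp: cutoff_deriv_def smooth_step_deriv_ge_1 intro!: sum.neutral)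

lemma cutoff_deriv_outer: "\<bar>x - c\<bar> \<ge> R + 1 \<Longrightarrow> cutoff_deriv c R k x = 0"
proof -
  assume "\<bar>x - c\<bar> \<ge> R + 1"
  then have "x - c + R + 1 \<le> 0 \<or> c + R + 1 - x \<le> 0" by linarith
  then show ?thesis
    unfolding cutoff_deriv_def by (auto intro!: sum.neutral simp: smooth_step_deriv_nonpos)
qed

lemma cutoff_inner: "\<bar>x - c\<bar> \<le> R \<Longrightarrow> cutoff c R x = 1"
  using cutoff_deriv_inner[where k = 0] has_derivs_0[OF has_derivs_cutoff] by simp

lemma cutoff_outer: "\<bar>x - c\<bar> \<ge> R + 1 \<Longrightarrow> cutoff c R x = 0"
  using cutoff_deriv_outer[where k = 0] has_derivs_0[OF has_derivs_cutoff] by simp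

lemma cutoff_continuous_on: "continuous_on S (cutoff c R)"
  using has_derivs_continuous_on[OF has_derivs_cutoff, of S c R 0] has_derivs_0[OF has_derivs_cutoff] by simp

lemma cutoff_deriv_bounded: "\<exists>B. \<forall>c R x. \<bar>cutoff_deriv c R k x\<bar> \<le> B"
proof -
  obtain B where B: "\<And>i x. \<bar>smooth_step_deriv i x\<bar> \<le> B i"
    using smooth_step_deriv_bounded by metis
  have B0: "B i \<ge> 0" for i
    using order_trans[OF abs_ge_zero B] by blast
  have "\<bar>cutoff_deriv c R k x\<bar> \<le> (\<Sum>i = 0..k. real (k choose i) * B i * B (k - i))" for c R x
    unfolding cutoff_deriv_def
  proof (rule order_trans[OF sum_abs sum_mono])
    fix i
    show "\<bar>real (k choose i) * smooth_step_deriv i (x - c + R + 1) *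
        ((-1) ^ (k - i) * smooth_step_deriv (k - i) (c + R + 1 - x))\<bar> \<le> real (k choose i) * B i * B (k - i)"
      unfolding abs_mult power_abs by (simp add: mult_mono B B0 mult_left_mono)
  qed
  then show ?thesis by blast
qed

section \<open>Derivatives of the heat kernel\<close>

lemma power_le_fact_mult_exp:
  fixes w :: real
  assumes "w \<ge> 0"
  shows "w ^ i \<le> fact i * exp w"
proof -
  have s: "(\<lambda>n. w ^ n /\<^sub>R fact n) sums exp w" by (rule exp_converges)
  have "sum (\<lambda>n. w ^ n /\<^sub>R fact n) {i} \<le> suminf (\<lambda>n. w ^ n /\<^sub>R fact n)"
    by (rule sum_le_suminf) (use s assms in \<open>auto simp: sums_iff\<close>)
  then show ?thesis
    using s by (simp add: sums_iff divide_simps mult.commute)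
qed

lemma abs_power_mult_gauss_bounded: "\<exists>C. \<forall>z::real. \<bar>z\<bar> ^ i * exp (- z\<^sup>2 / 8) \<le> C"
proof -
  have "\<bar>z\<bar> ^ i * exp (- z\<^sup>2 / 8) \<le> 1 + 8 ^ i * fact i" for z :: real
  proof -
    define w where "w = z\<^sup>2 / 8"
    have w: "w \<ge> 0" "exp (- z\<^sup>2 / 8) = inverse (exp w)"
      by (simp_all add: w_def exp_minus)
    have "\<bar>z\<bar> ^ i \<le> 1 + \<bar>z\<bar> ^ (2 * i)"
      by (cases "\<bar>z\<bar> \<le> 1") (auto intro: order_trans[OF power_le_one] power_increasing add_increasing)
    also have "\<bar>z\<bar> ^ (2 * i) = 8 ^ i * w ^ i"
      unfolding power_mult power2_abs w_def by (simp add: power_divide)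
    finally have "\<bar>z\<bar> ^ i * exp (- z\<^sup>2 / 8) \<le> (1 + 8 ^ i * w ^ i) * inverse (exp w)"
      unfolding w(2) by (intro mult_right_mono) auto
    also have "\<dots> = inverse (exp w) + 8 ^ i * (w ^ i * inverse (exp w))"
      by (simp add: algebra_simps)
    also have "\<dots> \<le> 1 + 8 ^ i * fact i"
      using power_le_fact_mult_exp[OF w(1), of i] w(1)
      by (intro add_mono mult_left_mono) (auto simp: inverse_le_1_iff divide_simps)
    finally show ?thesis .
  qed
  then show ?thesis by blast
qed

lemma poly_mult_gauss_bounded: "\<exists>C. \<forall>z::real. \<bar>poly p z\<bar> * exp (- z\<^sup>2 / 8) \<le> C"
proof -
  obtain C where C: "\<And>i (z::real). \<bar>z\<bar> ^ i * exp (- z\<^sup>2 / 8) \<le> C i"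
    using abs_power_mult_gauss_bounded by metis
  have "\<bar>poly p z\<bar> * exp (- z\<^sup>2 / 8) \<le> (\<Sum>i\<le>degree p. \<bar>coeff p i\<bar> * C i)" for z
  proof -
    have "\<bar>poly p z\<bar> \<le> (\<Sum>i\<le>degree p. \<bar>coeff p i\<bar> * \<bar>z\<bar> ^ i)"
      unfolding poly_altdef by (rule order_trans[OF sum_abs]) (simp add: abs_mult power_abs)
    then have "\<bar>poly p z\<bar> * exp (- z\<^sup>2 / 8) \<le> (\<Sum>i\<le>degree p. \<bar>coeff p i\<bar> * \<bar>z\<bar> ^ i) * exp (- z\<^sup>2 / 8)"
      by (intro mult_right_mono) auto
    also have "\<dots> = (\<Sum>i\<le>degree p. \<bar>coeff p i\<bar> * (\<bar>z\<bar> ^ i * exp (- z\<^sup>2 / 8)))"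
      by (simp add: sum_distrib_right mult.assoc)
    also have "\<dots> \<le> (\<Sum>i\<le>degree p. \<bar>coeff p i\<bar> * C i)"
      by (intro sum_mono mult_left_mono C) auto
    finally show ?thesis .
  qed
  then show ?thesis by blast
qed

fun gauss_poly :: "nat \<Rightarrow> real poly" where
  "gauss_poly 0 = 1"
| "gauss_poly (Suc k) = pderiv (gauss_poly k) + [:0, -1/2:] * gauss_poly k"

definition gauss_deriv :: "nat \<Rightarrow> real \<Rightarrow> real" where
  "gauss_deriv k z = poly (gauss_poly k) z * heat_kernel 1 z"

lemma DERIV_heat_kernel_1: "(heat_kernel 1 has_real_derivative - (x / 2) * heat_kernel 1 x) (at x)"
  unfolding heat_kernel_def by (auto intro!: derivative_eq_intros simp: field_simps)

lemma has_derivs_gauss: "has_derivs (heat_kernel 1) gauss_deriv"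
  unfolding has_derivs_def
proof (intro conjI allI)
  show "gauss_deriv 0 = heat_kernel 1"
    by (simp add: gauss_deriv_def fun_eq_iff)
  fix k x
  have "((\<lambda>z. poly (gauss_poly k) z * heat_kernel 1 z) has_real_derivative
      poly (pderiv (gauss_poly k)) x * heat_kernel 1 x + - (x / 2) * heat_kernel 1 x * poly (gauss_poly k) x) (at x)"
    by (rule DERIV_mult[OF poly_DERIV DERIV_heat_kernel_1])
  then show "(gauss_deriv k has_real_derivative gauss_deriv (Suc k) x) (at x)"
    by (simp add: gauss_deriv_def[abs_def] algebra_simps)
qed

lemma gauss_deriv_bounded: "\<exists>C. \<forall>z. \<bar>gauss_deriv k z\<bar> \<le> C * exp (- z\<^sup>2 / 8)"
proof -
  obtain C where C: "\<And>z. \<bar>poly (gauss_poly k) z\<bar> * exp (- z\<^sup>2 / 8) \<le> C"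
    using poly_mult_gauss_bounded by blast
  have "\<bar>gauss_deriv k z\<bar> \<le> C * exp (- z\<^sup>2 / 8)" for z
  proof -
    have "exp (- z\<^sup>2 / 4) = exp (- z\<^sup>2 / 8) * exp (- z\<^sup>2 / 8)"
      by (simp flip: exp_add)
    then have "\<bar>gauss_deriv k z\<bar> = \<bar>poly (gauss_poly k) z\<bar> * exp (- z\<^sup>2 / 8) * exp (- z\<^sup>2 / 8) / sqrt (4 * pi)"
      by (simp add: gauss_deriv_def heat_kernel_def abs_mult)
    also have "\<dots> \<le> \<bar>poly (gauss_poly k) z\<bar> * exp (- z\<^sup>2 / 8) * exp (- z\<^sup>2 / 8)"
      using divide_left_mono[of 1 "sqrt (4 * pi)" "\<bar>poly (gauss_poly k) z\<bar> * exp (- z\<^sup>2 / 8) * exp (- z\<^sup>2 / 8)"]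
        pi_gt3 by simp
    also have "\<dots> \<le> C * exp (- z\<^sup>2 / 8)"
      by (intro mult_right_mono C) auto
    finally show ?thesis .
  qed
  then show ?thesis by blast
qed

definition heat_kernel_deriv :: "nat \<Rightarrow> real \<Rightarrow> real \<Rightarrow> real" where
  "heat_kernel_deriv k \<tau> y = (1 / sqrt \<tau>) ^ Suc k * gauss_deriv k (y / sqrt \<tau>)"

lemma heat_kernel_scaling: "\<tau> > 0 \<Longrightarrow> heat_kernel \<tau> y = 1 / sqrt \<tau> * heat_kernel 1 (1 / sqrt \<tau> * y)"
  by (simp add: heat_kernel_def real_sqrt_mult power_divide field_simps)

lemma has_derivs_heat_kernel:
  assumes "\<tau> > 0"
  shows "has_derivs (heat_kernel \<tau>) (\<lambda>k. heat_kernel_deriv k \<tau>)"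
proof -
  have "has_derivs (\<lambda>y. 1 / sqrt \<tau> * heat_kernel 1 (1 / sqrt \<tau> * y + 0))
     (\<lambda>k y. 1 / sqrt \<tau> * ((1 / sqrt \<tau>) ^ k * gauss_deriv k (1 / sqrt \<tau> * y + 0)))"
    by (intro has_derivs_cmult has_derivs_affine has_derivs_gauss)
  moreover have "heat_kernel \<tau> = (\<lambda>y. 1 / sqrt \<tau> * heat_kernel 1 (1 / sqrt \<tau> * y + 0))"
    using heat_kernel_scaling[OF assms] by (simp add: fun_eq_iff)
  moreover have "(\<lambda>k. heat_kernel_deriv k \<tau>) =
      (\<lambda>k y. 1 / sqrt \<tau> * ((1 / sqrt \<tau>) ^ k * gauss_deriv k (1 / sqrt \<tau> * y + 0)))"
    by (simp add: fun_eq_iff heat_kernel_deriv_def)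
  ultimately show ?thesis by simp
qed

lemma heat_kernel_deriv_0: "\<tau> > 0 \<Longrightarrow> heat_kernel_deriv 0 \<tau> = heat_kernel \<tau>"
  using has_derivs_0[OF has_derivs_heat_kernel] by blast

lemma funpow_deriv_heat_kernel: "\<tau> > 0 \<Longrightarrow> (deriv ^^ k) (heat_kernel \<tau>) = heat_kernel_deriv k \<tau>"
  using has_derivs_funpow_deriv[OF has_derivs_heat_kernel] by blast

lemma has_derivs_heat_kernel_reflect:
  assumes "\<tau> > 0"
  shows "has_derivs (\<lambda>x. heat_kernel_deriv k \<tau> (c - x)) (\<lambda>j x. (-1) ^ j * heat_kernel_deriv (k + j) \<tau> (c - x))"
  using has_derivs_affine[OF has_derivs_shift[OF has_derivs_heat_kernel[OF assms]], of k "-1" c]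
  by simp

lemma heat_kernel_deriv_bound:
  obtains C where "C \<ge> 0"
    "\<And>\<tau> y. \<tau> > 0 \<Longrightarrow> \<bar>heat_kernel_deriv k \<tau> y\<bar> \<le> C * (1 / sqrt \<tau>) ^ Suc k * exp (- y\<^sup>2 / (8 * \<tau>))"
proof -
  obtain C where C: "\<And>z. \<bar>gauss_deriv k z\<bar> \<le> C * exp (- z\<^sup>2 / 8)"
    using gauss_deriv_bounded by blast
  have "\<bar>heat_kernel_deriv k \<tau> y\<bar> \<le> C * (1 / sqrt \<tau>) ^ Suc k * exp (- y\<^sup>2 / (8 * \<tau>))"
    if "\<tau> > 0" for \<tau> y
  proof -
    have "\<bar>heat_kernel_deriv k \<tau> y\<bar> = (1 / sqrt \<tau>) ^ Suc k * \<bar>gauss_deriv k (y / sqrt \<tau>)\<bar>"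
      using that by (simp add: heat_kernel_deriv_def abs_mult)
    also have "\<dots> \<le> (1 / sqrt \<tau>) ^ Suc k * (C * exp (- (y / sqrt \<tau>)\<^sup>2 / 8))"
      using that by (intro mult_left_mono C) auto
    finally show ?thesis
      using that by (simp add: power_divide mult_ac)
  qed
  moreover have "C \<ge> 0"
    using C[of 0] by (smt (verit) abs_ge_zero exp_gt_zero mult_nonneg_nonneg zero_le_mult_iff)
  ultimately show thesis using that by blast
qed

lemma heat_kernel_deriv_continuous_on:
  "continuous_on ({0<..} \<times> UNIV) (\<lambda>p. heat_kernel_deriv k (fst p) (snd p))"
proof -
  have "continuous_on ({0<..} \<times> UNIV) (\<lambda>p::real \<times> real. gauss_deriv k (snd p / sqrt (fst p)))"
    by (rule continuous_on_compose2[OF has_derivs_continuous_on[OF has_derivs_gauss]])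
       (auto intro!: continuous_intros)
  then show ?thesis
    unfolding heat_kernel_deriv_def by (auto intro!: continuous_intros)
qed

lemma heat_kernel_deriv_2:
  assumes "\<tau> > 0"
  shows "heat_kernel_deriv 2 \<tau> y = heat_kernel \<tau> y * (y\<^sup>2 / (4 * \<tau>\<^sup>2) - 1 / (2 * \<tau>))"
proof -
  have "gauss_poly 2 = [:-1/2, 0, 1/4:]"
    by (simp add: numeral_2_eq_2 pderiv_pCons)
  moreover have "(sqrt \<tau>)\<^sup>2 = \<tau>" "sqrt (4 * pi * \<tau>) = sqrt (4 * pi) * sqrt \<tau>"
    using assms by (simp_all add: real_sqrt_mult)
  ultimately show ?thesis
    using assms unfolding heat_kernel_deriv_def gauss_deriv_def heat_kernel_def
    by (simp add: field_simps power2_eq_square power3_eq_cube)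
qed

lemma DERIV_heat_kernel_time:
  assumes "\<tau> > 0"
  shows "((\<lambda>s. heat_kernel s y) has_real_derivative heat_kernel_deriv 2 \<tau> y) (at \<tau>)"
proof -
  have "((\<lambda>s. exp (- (y ^ 2) / (4 * s)) / sqrt (4 * pi * s)) has_real_derivative
      heat_kernel \<tau> y * (y\<^sup>2 / (4 * \<tau>\<^sup>2) - 1 / (2 * \<tau>))) (at \<tau>)"
    using assms pi_gt_zero
    by (auto intro!: derivative_eq_intros simp: heat_kernel_def field_simps power2_eq_square real_sqrt_mult)
  then show ?thesis
    unfolding heat_kernel_deriv_2[OF assms] by (simp add: heat_kernel_def[abs_def])
qed

lemma heat_kernel_continuous_on: "continuous_on ({0<..} \<times> UNIV) (\<lambda>p. heat_kernel (fst p) (snd p))"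
  unfolding heat_kernel_def by (intro continuous_intros) auto

lemma normal_density_has_integral: "\<sigma> > 0 \<Longrightarrow> (normal_density \<mu> \<sigma> has_integral 1) UNIV"
  using has_integral_integral_lborel[OF integrable_normal_density[where \<mu> = \<mu> and \<sigma> = \<sigma>]] by simp

lemma heat_kernel_has_integral:
  assumes "\<tau> > 0"
  shows "(heat_kernel \<tau> has_integral 1) UNIV"
proof -
  have "heat_kernel \<tau> = normal_density 0 (sqrt (2 * \<tau>))"
    using assms by (simp add: fun_eq_iff heat_kernel_def normal_density_def)
  then show ?thesis
    using normal_density_has_integral[of "sqrt (2 * \<tau>)" 0] assms by simp
qed

lemma heat_kernel_nonneg: "\<tau> > 0 \<Longrightarrow> heat_kernel \<tau> y \<ge> 0"
  by (simp add: heat_kernel_def)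

lemma gauss_has_integral:
  assumes "a > 0"
  shows "((\<lambda>\<xi>. exp (- (c - \<xi>)\<^sup>2 / a)) has_integral sqrt (pi * a)) UNIV"
proof -
  have "((\<lambda>\<xi>. sqrt (pi * a) * normal_density c (sqrt (a / 2)) \<xi>) has_integral sqrt (pi * a) * 1) UNIV"
    using assms by (intro has_integral_mult_right normal_density_has_integral) simp
  moreover have "sqrt (pi * a) * normal_density c (sqrt (a / 2)) \<xi> = exp (- (c - \<xi>)\<^sup>2 / a)" for \<xi>
  proof -
    have "(\<xi> - c)\<^sup>2 = (c - \<xi>)\<^sup>2" "2 * pi * (sqrt (a / 2))\<^sup>2 = pi * a" "2 * (sqrt (a / 2))\<^sup>2 = a"
      using assms by (simp_all add: power2_commute)
    then show ?thesis
      using assms unfolding normal_density_def by simp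
  qed
  ultimately show ?thesis by simp
qed

lemma gauss_integrable:
  fixes a c :: real
  assumes "a > 0"
  shows "(\<lambda>\<xi>. exp (- (c - \<xi>)\<^sup>2 / a)) integrable_on UNIV"
  using gauss_has_integral[OF assms] by (rule has_integral_integrable)

lemma gauss_dominated_product:
  fixes F f :: "real \<Rightarrow> real"
  assumes F: "continuous_on UNIV F" "\<And>\<xi>. \<bar>F \<xi>\<bar> \<le> M"
    and f: "continuous_on UNIV f" "\<And>\<xi>. \<bar>f \<xi>\<bar> \<le> C * exp (- (c - \<xi>)\<^sup>2 / a)"
    and a: "a > 0"
  shows "(\<lambda>\<xi>. F \<xi> * f \<xi>) integrable_on UNIV"
    and "\<bar>integral UNIV (\<lambda>\<xi>. F \<xi> * f \<xi>)\<bar> \<le> M * C * sqrt (pi * a)"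
proof -
  have gauss: "((\<lambda>\<xi>. M * C * exp (- (c - \<xi>)\<^sup>2 / a)) has_integral M * C * sqrt (pi * a)) UNIV"
    by (intro has_integral_mult_right gauss_has_integral a)
  have bound: "norm (F \<xi> * f \<xi>) \<le> M * C * exp (- (c - \<xi>)\<^sup>2 / a)" for \<xi>
    using mult_mono[OF F(2) f(2)] order_trans[OF abs_ge_zero F(2)] by (simp add: abs_mult mult.assoc)
  have "(\<lambda>\<xi>. F \<xi> * f \<xi>) \<in> borel_measurable (lebesgue_on UNIV)"
    by (intro continuous_imp_measurable_on_sets_lebesgue continuous_intros F f) auto
  then show int: "(\<lambda>\<xi>. F \<xi> * f \<xi>) integrable_on UNIV"
    by (rule measurable_bounded_by_integrable_imp_integrable[OF _ has_integral_integrable[OF gauss]])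
       (use bound in auto)
  show "\<bar>integral UNIV (\<lambda>\<xi>. F \<xi> * f \<xi>)\<bar> \<le> M * C * sqrt (pi * a)"
    using integral_norm_bound_integral[OF int has_integral_integrable[OF gauss] bound]
    unfolding integral_unique[OF gauss] by simp
qed

lemma heat_kernel_deriv_reflect_continuous_on:
  assumes "\<tau> > 0"
  shows "continuous_on S (\<lambda>x. heat_kernel_deriv k \<tau> (c - x))"
  using has_derivs_continuous_on[OF has_derivs_heat_kernel_reflect[OF assms, where k = k and c = c], where k = 0]
  by simp

lemma integrable_mult_heat_kernel_deriv:
  fixes F :: "real \<Rightarrow> real"
  assumes "continuous_on UNIV F" "\<And>x. \<bar>F x\<bar> \<le> M" "\<tau> > 0"
  shows "(\<lambda>x. F x * heat_kernel_deriv k \<tau> (c - x)) integrable_on UNIV"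
proof -
  obtain C where C: "\<And>\<tau> y. \<tau> > 0 \<Longrightarrow>
      \<bar>heat_kernel_deriv k \<tau> y\<bar> \<le> C * (1 / sqrt \<tau>) ^ Suc k * exp (- y\<^sup>2 / (8 * \<tau>))"
    using heat_kernel_deriv_bound by blast
  show ?thesis
    by (rule gauss_dominated_product(1)[OF assms(1,2) heat_kernel_deriv_reflect_continuous_on[OF assms(3)]
          C[OF assms(3), of "c - x" for x]])
       (use assms(3) in simp)
qed

lemma integral_affine_UNIV:
  fixes f :: "real \<Rightarrow> real"
  assumes f: "f absolutely_integrable_on UNIV" and m: "m \<noteq> 0"
  shows "integral UNIV (\<lambda>z. f (m * z + c)) = integral UNIV f / \<bar>m\<bar>"
proof -
  let ?g = "\<lambda>z. m * z + c"
  have der: "(?g has_field_derivative m) (at x within UNIV)" for x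
    by (auto intro!: derivative_eq_intros)
  have inj: "inj_on ?g UNIV"
    using m by (auto simp: inj_on_def)
  have "?g ` UNIV = UNIV"
  proof safe
    fix y :: real
    show "y \<in> range ?g"
      by (rule image_eqI[where x = "(y - c) / m"]) (use m in auto)
  qed auto
  then have "integral UNIV (\<lambda>x. \<bar>m\<bar> * f (?g x)) = integral UNIV f"
    using has_absolute_integral_change_of_variables_1'[OF _ der inj, of f "integral UNIV f"] f by simp
  then have "\<bar>m\<bar> * integral UNIV (\<lambda>x. f (?g x)) = integral UNIV f"
    by (simp only: integral_mult_right)
  with m show ?thesis
    by (simp add: field_simps)
qed

lemma integral_mult_heat_kernel_rescale:
  fixes f :: "real \<Rightarrow> real"
  assumes f: "continuous_on UNIV f" "\<And>x. \<bar>f x\<bar> \<le> B" and \<tau>: "\<tau> > 0"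
  shows "integral UNIV (\<lambda>\<xi>. f \<xi> * heat_kernel \<tau> (c - \<xi>)) = integral UNIV (\<lambda>z. f (c - sqrt \<tau> * z) * heat_kernel 1 z)"
proof -
  let ?F = "\<lambda>\<xi>. f \<xi> * heat_kernel \<tau> (c - \<xi>)"
  have "((\<lambda>\<xi>. B * (exp (- (c - \<xi>)\<^sup>2 / (4 * \<tau>)) / sqrt (4 * pi * \<tau>))) has_integral B * (sqrt (pi * (4 * \<tau>)) / sqrt (4 * pi * \<tau>))) UNIV"
    using \<tau> by (intro has_integral_mult_right has_integral_divide gauss_has_integral) simp
  then have "(\<lambda>\<xi>. B * heat_kernel \<tau> (c - \<xi>)) integrable_on UNIV"
    by (auto simp: heat_kernel_def power2_commute)
  moreover have "norm (?F \<xi>) \<le> B * heat_kernel \<tau> (c - \<xi>)" for \<xi>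
    using f(2)[of \<xi>] heat_kernel_nonneg[OF \<tau>, of "c - \<xi>"] by (simp add: abs_mult mult_right_mono)
  moreover have "continuous_on UNIV ?F"
    using heat_kernel_deriv_reflect_continuous_on[OF \<tau>, of UNIV 0 c]
    by (intro continuous_intros f(1)) (simp add: heat_kernel_deriv_0[OF \<tau>])
  ultimately have "?F absolutely_integrable_on UNIV"
    by (intro measurable_bounded_by_integrable_imp_absolutely_integrable[where g = "\<lambda>\<xi>. B * heat_kernel \<tau> (c - \<xi>)"]
        continuous_imp_measurable_on_sets_lebesgue) auto
  from integral_affine_UNIV[OF this, of "- sqrt \<tau>" c] \<tau>
  have "integral UNIV (\<lambda>z. ?F (- sqrt \<tau> * z + c)) = integral UNIV ?F / sqrt \<tau>"
    by simp
  moreover have "?F (- sqrt \<tau> * z + c) = f (c - sqrt \<tau> * z) * heat_kernel 1 z / sqrt \<tau>" for z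
    using \<tau> by (simp add: heat_kernel_scaling[OF \<tau>])
  ultimately show ?thesis
    using \<tau> by (simp add: integral_divide)
qed

lemma tendsto_integral_mult_heat_kernel_deriv:
  fixes F :: "real \<Rightarrow> real"
  assumes F: "continuous_on UNIV F" "\<And>x. \<bar>F x\<bar> \<le> B" and t: "t > 0"
  shows "((\<lambda>s. integral UNIV (\<lambda>\<xi>. F \<xi> * heat_kernel_deriv k (t - s) (c - \<xi>))) \<longlongrightarrow>
          integral UNIV (\<lambda>\<xi>. F \<xi> * heat_kernel_deriv k t (c - \<xi>))) (at_right 0)"
proof (rule tendsto_at_right_sequentially[where a = 0 and b = "t / 2"])
  obtain C where "C \<ge> 0" and C: "\<And>\<tau> y. \<tau> > 0 \<Longrightarrow>
      \<bar>heat_kernel_deriv k \<tau> y\<bar> \<le> C * (1 / sqrt \<tau>) ^ Suc k * exp (- y\<^sup>2 / (8 * \<tau>))"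
    using heat_kernel_deriv_bound[where k = k] by blast
  have "B \<ge> 0"
    using order_trans[OF abs_ge_zero F(2)] by blast
  fix S :: "nat \<Rightarrow> real"
  assume S: "\<And>i. 0 < S i" "\<And>i. S i < t / 2" "decseq S" "S \<longlonglongrightarrow> 0"
  have tS: "t - S i > 0" "t / 2 \<le> t - S i" "t - S i \<le> t" for i
    using S(1,2)[of i] by auto
  define f where "f i \<xi> = F \<xi> * heat_kernel_deriv k (t - S i) (c - \<xi>)" for i \<xi>
  define D where "D = B * C * (1 / sqrt (t / 2)) ^ Suc k"
  have "f i integrable_on UNIV" for i
    unfolding f_def by (rule integrable_mult_heat_kernel_deriv[OF F tS(1)])
  moreover have "norm (f i \<xi>) \<le> D * exp (- (c - \<xi>)\<^sup>2 / (8 * t))" for i \<xi>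
  proof -
    have "(1 / sqrt (t - S i)) ^ Suc k \<le> (1 / sqrt (t / 2)) ^ Suc k"
      using tS[of i] by (intro power_mono divide_left_mono) auto
    moreover have "(c - \<xi>)\<^sup>2 / (8 * t) \<le> (c - \<xi>)\<^sup>2 / (8 * (t - S i))"
      using tS[of i] by (intro divide_left_mono) auto
    ultimately have "C * (1 / sqrt (t - S i)) ^ Suc k * exp (- (c - \<xi>)\<^sup>2 / (8 * (t - S i))) \<le>
        C * (1 / sqrt (t / 2)) ^ Suc k * exp (- (c - \<xi>)\<^sup>2 / (8 * t))"
      using \<open>C \<ge> 0\<close> t by (intro mult_mono mult_left_mono) auto
    then have "\<bar>heat_kernel_deriv k (t - S i) (c - \<xi>)\<bar> \<le> C * (1 / sqrt (t / 2)) ^ Suc k * exp (- (c - \<xi>)\<^sup>2 / (8 * t))"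
      using C[OF tS(1), of i "c - \<xi>"] by linarith
    from mult_mono[OF F(2) this] have "\<bar>F \<xi>\<bar> * \<bar>heat_kernel_deriv k (t - S i) (c - \<xi>)\<bar> \<le>
        B * (C * (1 / sqrt (t / 2)) ^ Suc k * exp (- (c - \<xi>)\<^sup>2 / (8 * t)))"
      using \<open>B \<ge> 0\<close> by simp
    then show ?thesis
      by (simp only: f_def D_def real_norm_def abs_mult mult.assoc)
  qed
  moreover have "(\<lambda>i. f i \<xi>) \<longlonglongrightarrow> F \<xi> * heat_kernel_deriv k t (c - \<xi>)" for \<xi>
  proof -
    have "(\<lambda>i. (t - S i, c - \<xi>)) \<longlonglongrightarrow> (t, c - \<xi>)"
      using tendsto_Pair[OF tendsto_diff[OF tendsto_const S(4)] tendsto_const] by simp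
    then have "(\<lambda>i. heat_kernel_deriv k (fst (t - S i, c - \<xi>)) (snd (t - S i, c - \<xi>))) \<longlonglongrightarrow>
        heat_kernel_deriv k (fst (t, c - \<xi>)) (snd (t, c - \<xi>))"
      using t tS(1) by (intro continuous_on_tendsto_compose[OF heat_kernel_deriv_continuous_on]) auto
    then show ?thesis
      unfolding f_def by (intro tendsto_mult tendsto_const) simp
  qed
  ultimately have "(\<lambda>i. integral UNIV (f i)) \<longlonglongrightarrow> integral UNIV (\<lambda>\<xi>. F \<xi> * heat_kernel_deriv k t (c - \<xi>))"
    using t
    by (intro dominated_convergence(2)[where h = "\<lambda>\<xi>. D * exp (- (c - \<xi>)\<^sup>2 / (8 * t))"]
        integrable_on_mult_right gauss_integrable) auto
  then show "(\<lambda>i. integral UNIV (\<lambda>\<xi>. F \<xi> * heat_kernel_deriv k (t - S i) (c - \<xi>))) \<longlonglongrightarrow>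
      integral UNIV (\<lambda>\<xi>. F \<xi> * heat_kernel_deriv k t (c - \<xi>))"
    unfolding f_def[abs_def] by simp
qed (use t in simp)

lemma tendsto_integral_mult_heat_kernel:
  fixes w :: "real \<Rightarrow> real \<Rightarrow> real"
  assumes w: "continuous_on (UNIV \<times> {0<..}) (\<lambda>(x, t). w x t)"
    and B: "\<And>\<xi> s. t / 2 \<le> s \<Longrightarrow> s \<le> t \<Longrightarrow> \<bar>w \<xi> s\<bar> \<le> B" and t: "t > 0"
  shows "((\<lambda>s. integral UNIV (\<lambda>\<xi>. w \<xi> s * heat_kernel (t - s) (c - \<xi>))) \<longlongrightarrow> w c t) (at_left t)"
proof (rule tendsto_at_left_sequentially[where a = t and b = "t / 2"])
  fix S :: "nat \<Rightarrow> real"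
  assume S: "\<And>i. S i < t" "\<And>i. t / 2 < S i" "incseq S" "S \<longlonglongrightarrow> t"
  have S0: "S i > 0" for i
    using S(2)[of i] t by linarith
  define g where "g i z = w (c - sqrt (t - S i) * z) (S i) * heat_kernel 1 z" for i z
  have heat_1: "(heat_kernel 1 has_integral 1) UNIV" "heat_kernel 1 z \<ge> 0" for z
    by (simp_all add: heat_kernel_has_integral heat_kernel_nonneg)
  have "integral UNIV (\<lambda>\<xi>. w \<xi> (S i) * heat_kernel (t - S i) (c - \<xi>)) = integral UNIV (g i)" for i
    unfolding g_def using S(1,2)[of i]
    by (intro integral_mult_heat_kernel_rescale[OF continuous_on_slice[OF w S0] B]) auto
  moreover have "(\<lambda>i. integral UNIV (g i)) \<longlonglongrightarrow> integral UNIV (\<lambda>z. w c t * heat_kernel 1 z)"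
  proof (rule dominated_convergence(2)[where h = "\<lambda>z. B * heat_kernel 1 z"])
    show "(\<lambda>z. B * heat_kernel 1 z) integrable_on UNIV"
      using heat_1(1) by (intro integrable_on_mult_right) (rule has_integral_integrable)
    show bound: "norm (g i z) \<le> B * heat_kernel 1 z" for i z
      unfolding g_def real_norm_def abs_mult abs_of_nonneg[OF heat_1(2)]
      using B[of "S i"] S(1,2)[of i] heat_1(2)[of z] by (intro mult_right_mono) auto
    show "g i integrable_on UNIV" for i
    proof (rule measurable_bounded_by_integrable_imp_integrable[OF continuous_imp_measurable_on_sets_lebesgue])
      show "continuous_on UNIV (g i)"
        unfolding g_def
        by (intro continuous_intros continuous_on_compose2[OF continuous_on_slice[OF w S0]]
            has_derivs_continuous_on[OF has_derivs_gauss, where k = 0, simplified has_derivs_0[OF has_derivs_gauss]]) auto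
    qed (use bound \<open>(\<lambda>z. B * heat_kernel 1 z) integrable_on UNIV\<close> in auto)
    fix z
    have "(\<lambda>i. (c - sqrt (t - S i) * z, S i)) \<longlonglongrightarrow> (c - sqrt (t - t) * z, t)"
      by (intro tendsto_intros S(4))
    then have "(\<lambda>i. (\<lambda>(x, t). w x t) (c - sqrt (t - S i) * z, S i)) \<longlonglongrightarrow> (\<lambda>(x, t). w x t) (c, t)"
      using t S0 by (intro continuous_on_tendsto_compose[OF w]) auto
    then show "(\<lambda>i. g i z) \<longlonglongrightarrow> w c t * heat_kernel 1 z"
      unfolding g_def by (intro tendsto_mult tendsto_const) simp
  qed
  moreover have "integral UNIV (heat_kernel 1) = 1"
    using heat_1(1) by (rule integral_unique)
  ultimately show "(\<lambda>i. integral UNIV (\<lambda>\<xi>. w \<xi> (S i) * heat_kernel (t - S i) (c - \<xi>))) \<longlonglongrightarrow> w c t"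
    by simp
qed (use t in simp)

definition tail_kernel_deriv :: "real \<Rightarrow> real \<Rightarrow> real \<Rightarrow> nat \<Rightarrow> nat \<Rightarrow> real \<Rightarrow> real" where
  "tail_kernel_deriv c R \<tau> k j x = (\<Sum>i = 0..j. real (j choose i) *
     ((if i = 0 then 1 else 0) - cutoff_deriv c R i x) * ((-1) ^ (j - i) * heat_kernel_deriv (k + (j - i)) \<tau> (c - x)))"

lemma has_derivs_tail_kernel:
  assumes "\<tau> > 0"
  shows "has_derivs (\<lambda>x. (1 - cutoff c R x) * heat_kernel_deriv k \<tau> (c - x)) (tail_kernel_deriv c R \<tau> k)"
  using has_derivs_mult[OF has_derivs_diff[OF has_derivs_const has_derivs_cutoff] has_derivs_heat_kernel_reflect[OF assms]]
  unfolding tail_kernel_deriv_def[abs_def] by simp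

lemma tail_kernel_deriv_inner: "\<bar>x - c\<bar> \<le> R \<Longrightarrow> tail_kernel_deriv c R \<tau> k j x = 0"
  by (simp add: tail_kernel_deriv_def cutoff_deriv_inner)

lemma tail_kernel_deriv_outer:
  assumes "\<bar>x - c\<bar> \<ge> R + 1"
  shows "tail_kernel_deriv c R \<tau> k j x = (-1) ^ j * heat_kernel_deriv (k + j) \<tau> (c - x)"
proof -
  have "tail_kernel_deriv c R \<tau> k j x =
      (\<Sum>i = 0..j. if i = 0 then (-1) ^ j * heat_kernel_deriv (k + j) \<tau> (c - x) else 0)"
    unfolding tail_kernel_deriv_def cutoff_deriv_outer[OF assms] by (intro sum.cong) auto
  then show ?thesis by simp
qed

lemma exp_gauss_split:
  fixes x c R \<tau> :: real
  assumes "\<tau> > 0" "R \<le> \<bar>x - c\<bar>" "R \<ge> 0"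
  shows "exp (- (c - x)\<^sup>2 / (8 * \<tau>)) \<le> exp (- R\<^sup>2 / (16 * \<tau>)) * exp (- (c - x)\<^sup>2 / (16 * \<tau>))"
proof -
  have "R\<^sup>2 \<le> (c - x)\<^sup>2"
    using assms by (metis abs_le_square_iff abs_minus_commute abs_of_nonneg)
  then show ?thesis
    using assms(1) by (simp add: field_simps flip: exp_add)
qed

lemma inverse_sqrt_power_le:
  assumes "\<tau> > 0" "m \<le> N"
  shows "(1 / sqrt \<tau>) ^ Suc m \<le> (1 + 1 / \<tau>) ^ Suc N"
proof -
  have "1 / sqrt \<tau> \<le> 1 + 1 / \<tau>"
  proof (cases "\<tau> \<ge> 1")
    case True
    then have "1 / sqrt \<tau> \<le> 1" by simp
    moreover have "0 \<le> 1 / \<tau>" using assms(1) by simp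
    ultimately show ?thesis by linarith
  next
    case False
    then have "\<tau> \<le> sqrt \<tau>"
      using assms(1) by (simp add: real_le_rsqrt power2_eq_square mult_le_cancel_left1)
    then have "1 / sqrt \<tau> \<le> 1 / \<tau>"
      using assms(1) by (intro divide_left_mono) auto
    then show ?thesis by simp
  qed
  then have "(1 / sqrt \<tau>) ^ Suc m \<le> (1 + 1 / \<tau>) ^ Suc m"
    using assms(1) by (intro power_mono) auto
  also have "\<dots> \<le> (1 + 1 / \<tau>) ^ Suc N"
    using assms by (intro power_increasing) auto
  finally show ?thesis .
qed

text \<open>Away from the region where the cut-off is identically \<open>1\<close>, the heat kernel is
  already smaller than \<open>exp (- R\<^sup>2 / (16 * \<tau>))\<close>.\<close>

lemma tail_kernel_deriv_bound:
  obtains K where "K \<ge> 0" "\<And>c R \<tau> x. \<tau> > 0 \<Longrightarrow> R \<ge> 0 \<Longrightarrow> \<bar>tail_kernel_deriv c R \<tau> k j x\<bar> \<le>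
    K * (1 + 1 / \<tau>) ^ Suc (k + j) * exp (- R\<^sup>2 / (16 * \<tau>)) * exp (- (c - x)\<^sup>2 / (16 * \<tau>))"
proof -
  obtain B where B: "\<And>i c R x. \<bar>cutoff_deriv c R i x\<bar> \<le> B i"
    using cutoff_deriv_bounded by metis
  have "\<forall>m. \<exists>C. C \<ge> 0 \<and> (\<forall>\<tau> y. \<tau> > 0 \<longrightarrow>
      \<bar>heat_kernel_deriv m \<tau> y\<bar> \<le> C * (1 / sqrt \<tau>) ^ Suc m * exp (- y\<^sup>2 / (8 * \<tau>)))"
    by (meson heat_kernel_deriv_bound)
  then obtain C where C0: "\<And>m. C m \<ge> 0" and C: "\<And>m \<tau> y. \<tau> > 0 \<Longrightarrow>
      \<bar>heat_kernel_deriv m \<tau> y\<bar> \<le> C m * (1 / sqrt \<tau>) ^ Suc m * exp (- y\<^sup>2 / (8 * \<tau>))"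
    by metis
  define K where "K = (\<Sum>i = 0..j. real (j choose i) * (1 + B i) * C (k + (j - i)))"
  have B0: "B i \<ge> 0" for i
    using order_trans[OF abs_ge_zero B] by blast
  have "K \<ge> 0"
    unfolding K_def using B0 C0 by (intro sum_nonneg mult_nonneg_nonneg) auto
  moreover have "\<bar>tail_kernel_deriv c R \<tau> k j x\<bar> \<le>
      K * (1 + 1 / \<tau>) ^ Suc (k + j) * exp (- R\<^sup>2 / (16 * \<tau>)) * exp (- (c - x)\<^sup>2 / (16 * \<tau>))"
    if \<tau>: "\<tau> > 0" and R: "R \<ge> 0" for c R \<tau> x
  proof (cases "\<bar>x - c\<bar> \<le> R")
    case True
    then show ?thesis
      using \<open>K \<ge> 0\<close> \<tau> by (simp add: tail_kernel_deriv_inner)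
  next
    case False
    let ?E = "(1 + 1 / \<tau>) ^ Suc (k + j) * (exp (- R\<^sup>2 / (16 * \<tau>)) * exp (- (c - x)\<^sup>2 / (16 * \<tau>)))"
    have hk: "\<bar>heat_kernel_deriv (k + (j - i)) \<tau> (c - x)\<bar> \<le> C (k + (j - i)) * ?E" for i
    proof -
      have "\<bar>heat_kernel_deriv (k + (j - i)) \<tau> (c - x)\<bar> \<le>
          C (k + (j - i)) * (1 / sqrt \<tau>) ^ Suc (k + (j - i)) * exp (- (c - x)\<^sup>2 / (8 * \<tau>))"
        by (rule C[OF \<tau>])
      also have "\<dots> \<le> C (k + (j - i)) * ?E"
        unfolding mult.assoc using False R \<tau> C0
        by (intro mult_left_mono mult_mono inverse_sqrt_power_le exp_gauss_split) auto
      finally show ?thesis .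
    qed
    have "\<bar>tail_kernel_deriv c R \<tau> k j x\<bar> \<le> (\<Sum>i = 0..j. real (j choose i) * (1 + B i) * (C (k + (j - i)) * ?E))"
      unfolding tail_kernel_deriv_def
    proof (rule order_trans[OF sum_abs sum_mono])
      fix i
      have "\<bar>(if i = 0 then 1 else 0) - cutoff_deriv c R i x\<bar> \<le> 1 + B i"
        using B[of c R i x] by auto
      then show "\<bar>real (j choose i) * ((if i = 0 then 1 else 0) - cutoff_deriv c R i x) *
          ((-1) ^ (j - i) * heat_kernel_deriv (k + (j - i)) \<tau> (c - x))\<bar> \<le>
          real (j choose i) * (1 + B i) * (C (k + (j - i)) * ?E)"
        unfolding abs_mult power_abs using hk[of i] B0[of i]
        by (auto intro!: mult_mono)
    qed
    also have "\<dots> = K * ?E"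
      unfolding K_def by (simp add: sum_distrib_right mult.assoc)
    finally show ?thesis by (simp add: mult.assoc)
  qed
  ultimately show thesis using that by blast
qed

definition tail_weight :: "nat \<Rightarrow> real \<Rightarrow> real \<Rightarrow> real" where
  "tail_weight N \<tau> R = (1 + 1 / \<tau>) ^ N * exp (- R\<^sup>2 / (16 * \<tau>)) * sqrt (pi * (16 * \<tau>))"

lemma tail_weight_le:
  assumes "0 < \<alpha>" "\<alpha> \<le> \<tau>" "\<tau> \<le> \<beta>"
  shows "tail_weight N \<tau> R \<le> (1 + 1 / \<alpha>) ^ N * sqrt (pi * (16 * \<beta>)) * exp (- R\<^sup>2 / (16 * \<beta>))"
proof -
  have "(1 + 1 / \<tau>) ^ N \<le> (1 + 1 / \<alpha>) ^ N"
    using assms by (intro power_mono add_left_mono divide_left_mono) auto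
  moreover have "R\<^sup>2 / (16 * \<beta>) \<le> R\<^sup>2 / (16 * \<tau>)"
    using assms by (intro divide_left_mono) auto
  moreover have "sqrt (pi * (16 * \<tau>)) \<le> sqrt (pi * (16 * \<beta>))"
    using assms by simp
  ultimately show ?thesis
    unfolding tail_weight_def using assms
    by (simp add: mult_ac) (intro mult_mono; simp)
qed

lemma tail_weight_tendsto_0: "R \<noteq> 0 \<Longrightarrow> ((\<lambda>s. tail_weight N (t - s) R) \<longlongrightarrow> 0) (at_left t)"
  unfolding tail_weight_def by real_asymp

lemma zero_if_abs_le_gauss_tail:
  fixes d C a :: real
  assumes "a > 0" "\<And>R. R \<ge> 0 \<Longrightarrow> \<bar>d\<bar> \<le> C * exp (- R\<^sup>2 / a)"
  shows "d = 0"
proof -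
  have "((\<lambda>R::real. C * exp (- R\<^sup>2 / a)) \<longlongrightarrow> C * 0) at_top"
    using assms(1) by (intro tendsto_mult tendsto_const) real_asymp
  moreover have "eventually (\<lambda>R. \<bar>d\<bar> \<le> C * exp (- R\<^sup>2 / a)) at_top"
    using eventually_ge_at_top[of 0] by eventually_elim (rule assms(2))
  ultimately have "\<bar>d\<bar> \<le> C * 0"
    by (intro tendsto_le[OF _ _ tendsto_const]) auto
  then show ?thesis by simp
qed

lemma integrable_mult_tail_kernel:
  fixes F :: "real \<Rightarrow> real"
  assumes F: "continuous_on UNIV F" "\<And>x. \<bar>F x\<bar> \<le> M" and "\<tau> > 0" "R \<ge> 0"
  shows "(\<lambda>x. F x * tail_kernel_deriv c R \<tau> k j x) integrable_on UNIV"
proof -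
  obtain K where "\<And>x. \<bar>tail_kernel_deriv c R \<tau> k j x\<bar> \<le>
      (K * (1 + 1 / \<tau>) ^ Suc (k + j) * exp (- R\<^sup>2 / (16 * \<tau>))) * exp (- (c - x)\<^sup>2 / (16 * \<tau>))"
    using tail_kernel_deriv_bound[of k j] assms(3,4) by metis
  then show ?thesis
    by (rule gauss_dominated_product(1)[OF F has_derivs_continuous_on[OF has_derivs_tail_kernel[OF assms(3)]]])
       (use assms(3) in simp)
qed

lemma integral_mult_tail_kernel_bound:
  obtains K where "K \<ge> 0" "\<And>F M c R \<tau>. continuous_on UNIV F \<Longrightarrow> (\<And>x. \<bar>F x\<bar> \<le> M) \<Longrightarrow> \<tau> > 0 \<Longrightarrow> R \<ge> 0 \<Longrightarrow>
    \<bar>integral UNIV (\<lambda>x. F x * tail_kernel_deriv c R \<tau> k j x)\<bar> \<le> M * K * tail_weight (Suc (k + j)) \<tau> R"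
proof -
  obtain K where K0: "K \<ge> 0" and K: "\<And>c R \<tau> x. \<tau> > 0 \<Longrightarrow> R \<ge> 0 \<Longrightarrow> \<bar>tail_kernel_deriv c R \<tau> k j x\<bar> \<le>
      (K * (1 + 1 / \<tau>) ^ Suc (k + j) * exp (- R\<^sup>2 / (16 * \<tau>))) * exp (- (c - x)\<^sup>2 / (16 * \<tau>))"
    using tail_kernel_deriv_bound[where k = k and j = j] by blast
  have "\<bar>integral UNIV (\<lambda>x. F x * tail_kernel_deriv c R \<tau> k j x)\<bar> \<le> M * K * tail_weight (Suc (k + j)) \<tau> R"
    if "continuous_on UNIV F" "\<And>x. \<bar>F x\<bar> \<le> M" "\<tau> > 0" "R \<ge> 0" for F M c R \<tau>
    using gauss_dominated_product(2)[OF that(1,2) has_derivs_continuous_on[OF has_derivs_tail_kernel[OF that(3)]]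
        K[OF that(3,4)]] that(3)
    by (simp add: tail_weight_def mult_ac)
  with K0 show thesis using that by blast
qed

definition kernel_test :: "real \<Rightarrow> real \<Rightarrow> real \<Rightarrow> real \<Rightarrow> real" where
  "kernel_test c R \<tau> x = cutoff c R x * heat_kernel \<tau> (c - x)"

lemma has_derivs_kernel_test:
  assumes "\<tau> > 0"
  shows "has_derivs (kernel_test c R \<tau>)
    (\<lambda>k x. (-1) ^ k * heat_kernel_deriv k \<tau> (c - x) - tail_kernel_deriv c R \<tau> 0 k x)"
proof -
  have "kernel_test c R \<tau> = (\<lambda>x. heat_kernel_deriv 0 \<tau> (c - x) - (1 - cutoff c R x) * heat_kernel_deriv 0 \<tau> (c - x))"
    by (simp add: fun_eq_iff kernel_test_def heat_kernel_deriv_0[OF assms] algebra_simps)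
  then show ?thesis
    using has_derivs_diff[OF has_derivs_heat_kernel_reflect[OF assms, where k = 0 and c = c]
        has_derivs_tail_kernel[OF assms, where c = c and R = R and k = 0]]
    by simp
qed

lemma kernel_test_outside:
  assumes "x \<notin> {c - R - 1..c + R + 1}"
  shows "kernel_test c R \<tau> x = 0"
proof -
  have "\<bar>x - c\<bar> \<ge> R + 1" using assms by auto
  then show ?thesis
    by (simp add: kernel_test_def cutoff_outer)
qed

lemma test_fun_kernel_test: "\<tau> > 0 \<Longrightarrow> test_fun (kernel_test c R \<tau>)"
  by (rule test_fun_if_has_derivs[OF has_derivs_kernel_test kernel_test_outside])

text \<open>\<open>heat_defect\<close> is the second \<open>x\<close>-derivative of \<open>kernel_test\<close> minus \<open>cutoff\<close> times
  the \<open>\<tau>\<close>-derivative of the heat kernel; it vanishes where the cut-off is identically \<open>1\<close>.\<close>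

definition heat_defect :: "real \<Rightarrow> real \<Rightarrow> real \<Rightarrow> real \<Rightarrow> real" where
  "heat_defect c R \<tau> x = (1 - cutoff c R x) * heat_kernel_deriv 2 \<tau> (c - x) - tail_kernel_deriv c R \<tau> 0 2 x"

lemma heat_defect_eq:
  "heat_defect c R \<tau> x = ((-1) ^ 2 * heat_kernel_deriv 2 \<tau> (c - x) - tail_kernel_deriv c R \<tau> 0 2 x) -
     cutoff c R x * heat_kernel_deriv 2 \<tau> (c - x)"
  by (simp add: heat_defect_def algebra_simps)

lemma has_derivs_heat_defect:
  assumes "\<tau> > 0"
  shows "has_derivs (heat_defect c R \<tau>) (\<lambda>k x. tail_kernel_deriv c R \<tau> 2 k x - tail_kernel_deriv c R \<tau> 0 (k + 2) x)"
  using has_derivs_diff[OF has_derivs_tail_kernel[OF assms, where c = c and R = R and k = 2]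
      has_derivs_shift[OF has_derivs_tail_kernel[OF assms, where c = c and R = R and k = 0], where m = 2]]
  unfolding heat_defect_def[abs_def] by (simp add: add.commute)

lemma heat_defect_outside:
  assumes "x \<notin> {c - R - 1..c + R + 1}"
  shows "heat_defect c R \<tau> x = 0"
proof -
  have "\<bar>x - c\<bar> \<ge> R + 1" using assms by auto
  then show ?thesis
    by (simp add: heat_defect_def cutoff_outer tail_kernel_deriv_outer numeral_2_eq_2)
qed

lemma test_fun_heat_defect: "\<tau> > 0 \<Longrightarrow> test_fun (heat_defect c R \<tau>)"
  by (rule test_fun_if_has_derivs[OF has_derivs_heat_defect heat_defect_outside])

lemma Bc_bounded:
  assumes "Bc F"
  shows "\<exists>B. \<forall>x. \<bar>F x\<bar> \<le> B"
proof -
  from assms obtain L where c: "continuous_on UNIV F" and l0: "(F \<longlongrightarrow> 0) at_bot" and lL: "(F \<longlongrightarrow> L) at_top"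
    by (auto simp: Bc_def)
  have "eventually (\<lambda>x. dist (F x) 0 < 1) at_bot"
    using l0 by (rule tendstoD) simp
  then obtain a where a: "\<And>x. x \<le> a \<Longrightarrow> \<bar>F x\<bar> < 1"
    by (auto simp: eventually_at_bot_linorder)
  have "eventually (\<lambda>x. dist (F x) L < 1) at_top"
    using lL by (rule tendstoD) simp
  then obtain b where b: "\<And>x. x \<ge> b \<Longrightarrow> \<bar>F x - L\<bar> < 1"
    by (auto simp: eventually_at_top_linorder dist_real_def)
  obtain B where B: "\<And>x. x \<in> {a..b} \<Longrightarrow> \<bar>F x\<bar> \<le> B"
    using continuous_on_compact_bound[OF compact_Icc continuous_on_subset[OF c subset_UNIV]]
    unfolding real_norm_def by blast
  have "\<bar>F x\<bar> \<le> max B (\<bar>L\<bar> + 1)" for x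
  proof (cases "x \<in> {a..b}")
    case True
    then show ?thesis using B by force
  next
    case False
    then have "x \<le> a \<or> x \<ge> b" by auto
    then show ?thesis using a[of x] b[of x] by auto
  qed
  then show ?thesis by blast
qed

lemma Bc_abs_le_Acn_norm:
  assumes "Bc F"
  shows "\<bar>F x\<bar> \<le> Acn_norm F"
proof -
  obtain B where B: "\<And>x. \<bar>F x\<bar> \<le> B"
    using Bc_bounded[OF assms] by blast
  have "\<bar>F u - F v\<bar> \<le> B + B" for u v
    using abs_triangle_ineq4[of "F u" "F v"] B[of u] B[of v] by linarith
  then have bdd: "bdd_above ((\<lambda>p. \<bar>F (fst p) - F (snd p)\<bar>) ` {p. fst p < snd p})"
    by (intro bdd_aboveI[of _ "B + B"]) auto
  have le: "\<bar>F y - F x\<bar> \<le> Acn_norm F" if "y < x" for y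
    unfolding Acn_norm_def using cSUP_upper[OF _ bdd, of "(y, x)"] that by simp
  have "(F \<longlongrightarrow> 0) at_bot"
    using assms by (simp add: Bc_def)
  then have "((\<lambda>y. \<bar>F y - F x\<bar>) \<longlongrightarrow> \<bar>0 - F x\<bar>) at_bot"
    by (intro tendsto_intros)
  moreover have "eventually (\<lambda>y. \<bar>F y - F x\<bar> \<le> Acn_norm F) at_bot"
    unfolding eventually_at_bot_linorder by (rule exI[of _ "x - 1"]) (auto intro: le)
  ultimately have "\<bar>0 - F x\<bar> \<le> Acn_norm F"
    by (rule tendsto_upperbound) simp
  then show ?thesis by simp
qed

lemma Bc_diff: "Bc F \<Longrightarrow> Bc G \<Longrightarrow> Bc (\<lambda>x. F x - G x)"
  unfolding Bc_def by (auto intro!: continuous_intros tendsto_eq_intros)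

text \<open>The boundary term \<open>F(\<infinity>) g(\<infinity>)\<close> in \<open>heat_conv\<close> vanishes since the heat kernel decays.\<close>

lemma heat_conv_eq_integral:
  assumes "t > 0" "n \<ge> 1"
  shows "heat_conv n G t x = integral UNIV (\<lambda>\<xi>. G \<xi> * heat_kernel_deriv n t (x - \<xi>))"
proof -
  define g where "g \<xi> = heat_kernel_deriv (n - 1) t (x - \<xi>)" for \<xi>
  obtain C where "C \<ge> 0" and C: "\<And>\<tau> y. \<tau> > 0 \<Longrightarrow>
      \<bar>heat_kernel_deriv (n - 1) \<tau> y\<bar> \<le> C * (1 / sqrt \<tau>) ^ Suc (n - 1) * exp (- y\<^sup>2 / (8 * \<tau>))"
    using heat_kernel_deriv_bound[where k = "n - 1"] by blast
  have "(g \<longlongrightarrow> 0) at_top"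
  proof (rule Lim_null_comparison)
    show "eventually (\<lambda>\<xi>. norm (g \<xi>) \<le> C * (1 / sqrt t) ^ Suc (n - 1) * exp (- (x - \<xi>)\<^sup>2 / (8 * t))) at_top"
      unfolding g_def using C[OF assms(1)] by simp
    have "((\<lambda>\<xi>::real. exp (- (x - \<xi>)\<^sup>2 / (8 * t))) \<longlongrightarrow> 0) at_top"
      using assms(1) by real_asymp
    then show "((\<lambda>\<xi>. C * (1 / sqrt t) ^ Suc (n - 1) * exp (- (x - \<xi>)\<^sup>2 / (8 * t))) \<longlongrightarrow> 0) at_top"
      by (rule tendsto_mult_right_zero)
  qed
  then have "Lim at_top g = 0"
    by (rule tendsto_Lim[OF trivial_limit_at_top_linorder])
  moreover have "deriv g = (\<lambda>\<xi>. - heat_kernel_deriv n t (x - \<xi>))"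
  proof -
    have "(deriv ^^ 1) g = (\<lambda>\<xi>. (-1) ^ 1 * heat_kernel_deriv (n - 1 + 1) t (x - \<xi>))"
      unfolding g_def[abs_def] by (rule has_derivs_funpow_deriv[OF has_derivs_heat_kernel_reflect[OF assms(1)]])
    then show ?thesis
      using assms(2) by simp
  qed
  moreover have "(\<lambda>\<xi>. (deriv ^^ (n - 1)) (heat_kernel t) (x - \<xi>)) = g"
    by (simp add: g_def[abs_def] funpow_deriv_heat_kernel[OF assms(1)])
  ultimately show ?thesis
    unfolding heat_conv_def Let_def by simp
qed

section \<open>Uniqueness for the heat equation\<close>

locale heat_solution =
  fixes n :: nat and u ux uxx ut P :: "real \<Rightarrow> real \<Rightarrow> real" and G :: "real \<Rightarrow> real" and M :: real
  assumes ux: "\<And>x t. t > 0 \<Longrightarrow> ((\<lambda>y. u y t) has_real_derivative ux x t) (at x)"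
    and uxx: "\<And>x t. t > 0 \<Longrightarrow> ((\<lambda>y. ux y t) has_real_derivative uxx x t) (at x)"
    and ut: "\<And>x t. t > 0 \<Longrightarrow> ((\<lambda>s. u x s) has_real_derivative ut x t) (at t)"
    and ux_continuous: "continuous_on (UNIV \<times> {0<..}) (\<lambda>(x, t). ux x t)"
    and uxx_continuous: "continuous_on (UNIV \<times> {0<..}) (\<lambda>(x, t). uxx x t)"
    and ut_continuous: "continuous_on (UNIV \<times> {0<..}) (\<lambda>(x, t). ut x t)"
    and heat: "\<And>x t. t > 0 \<Longrightarrow> ut x t - uxx x t = 0"
    and primitive: "\<And>t. t > 0 \<Longrightarrow> Bc (P t) \<and> distr_deriv n (P t) (\<lambda>x. u x t)"
    and norm_bound: "\<And>t. t > 0 \<Longrightarrow> Acn_norm (P t) \<le> M"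
    and initial_Bc: "Bc G"
    and initial: "((\<lambda>t. Acn_norm (\<lambda>x. P t x - G x)) \<longlongrightarrow> 0) (at_right 0)"
begin

lemma u_continuous_on: "continuous_on (UNIV \<times> {0<..}) (\<lambda>(x, t). u x t)"
  by (rule continuous_on_half_plane_if_partials[OF ux ut ux_continuous ut_continuous])

lemma u_slice_continuous_on: "t > 0 \<Longrightarrow> continuous_on S (\<lambda>x. u x t)"
  by (rule continuous_on_slice[OF u_continuous_on])

lemma P_continuous_on: "t > 0 \<Longrightarrow> continuous_on UNIV (P t)"
  using primitive by (simp add: Bc_def)

lemma abs_P_le: "t > 0 \<Longrightarrow> \<bar>P t x\<bar> \<le> M"
  using Bc_abs_le_Acn_norm[of "P t" x] primitive norm_bound by fastforce

lemma M_nonneg: "M \<ge> 0"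
  using abs_P_le[of 1 0] by linarith

lemma abs_P_minus_initial_le: "t > 0 \<Longrightarrow> \<bar>P t x - G x\<bar> \<le> Acn_norm (\<lambda>x. P t x - G x)"
  using Bc_abs_le_Acn_norm[OF Bc_diff[OF _ initial_Bc]] primitive by blast

lemma integral_u_mult_test:
  assumes "t > 0" "has_derivs \<phi> D" "test_fun \<phi>"
  shows "integral UNIV (\<lambda>x. u x t * \<phi> x) = (-1) ^ n * integral UNIV (\<lambda>x. P t x * D n x)"
  using primitive[OF assms(1)] assms(3) has_derivs_funpow_deriv[OF assms(2)] by (simp add: distr_deriv_def)

text \<open>\<open>kernel_pairing x0 t0 s\<close> pairs \<open>u(\<cdot>, s) = P(s)\<^sup>(\<^sup>n\<^sup>)\<close> with the backward heat kernel
  \<open>\<Theta>(t0 - s, x0 - \<cdot>)\<close>, moving all \<open>n\<close> derivatives onto the kernel; \<open>cutoff_pairing\<close> pairs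
  \<open>u(\<cdot>, s)\<close> directly with the compactly supported truncation \<open>kernel_test\<close> of that kernel.\<close>

definition kernel_pairing :: "real \<Rightarrow> real \<Rightarrow> real \<Rightarrow> real" where
  "kernel_pairing x0 t0 s = integral UNIV (\<lambda>\<xi>. P s \<xi> * heat_kernel_deriv n (t0 - s) (x0 - \<xi>))"

definition cutoff_pairing :: "real \<Rightarrow> real \<Rightarrow> real \<Rightarrow> real \<Rightarrow> real" where
  "cutoff_pairing x0 t0 R s = integral UNIV (\<lambda>\<xi>. u \<xi> s * kernel_test x0 R (t0 - s) \<xi>)"

lemma kernel_pairing_cutoff_pairing_close:
  obtains C where "C \<ge> 0" "\<And>x0 t0 R s. 0 < s \<Longrightarrow> s < t0 \<Longrightarrow> R \<ge> 0 \<Longrightarrow>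
    \<bar>kernel_pairing x0 t0 s - cutoff_pairing x0 t0 R s\<bar> \<le> C * tail_weight (Suc n) (t0 - s) R"
proof -
  obtain K where "K \<ge> 0" and K: "\<And>F M c R \<tau>. continuous_on UNIV F \<Longrightarrow> (\<And>x. \<bar>F x\<bar> \<le> M) \<Longrightarrow> \<tau> > 0 \<Longrightarrow> R \<ge> 0 \<Longrightarrow>
      \<bar>integral UNIV (\<lambda>x. F x * tail_kernel_deriv c R \<tau> 0 n x)\<bar> \<le> M * K * tail_weight (Suc (0 + n)) \<tau> R"
    using integral_mult_tail_kernel_bound[where k = 0 and j = n] by blast
  have "\<bar>kernel_pairing x0 t0 s - cutoff_pairing x0 t0 R s\<bar> \<le> M * K * tail_weight (Suc n) (t0 - s) R"
    if s: "0 < s" "s < t0" and R: "R \<ge> 0" for x0 t0 R s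
  proof -
    define \<tau> where "\<tau> = t0 - s"
    have \<tau>: "\<tau> > 0" using s by (simp add: \<tau>_def)
    let ?W = "\<lambda>x. P s x * tail_kernel_deriv x0 R \<tau> 0 n x"
    have "cutoff_pairing x0 t0 R s =
        (-1) ^ n * integral UNIV (\<lambda>x. P s x * ((-1) ^ n * heat_kernel_deriv n \<tau> (x0 - x) - tail_kernel_deriv x0 R \<tau> 0 n x))"
      unfolding cutoff_pairing_def \<tau>_def[symmetric]
      by (rule integral_u_mult_test[OF s(1) has_derivs_kernel_test[OF \<tau>] test_fun_kernel_test[OF \<tau>]])
    also have "\<dots> = (-1) ^ n * ((-1) ^ n * kernel_pairing x0 t0 s - integral UNIV ?W)"
    proof -
      have "(\<lambda>x. (-1) ^ n * (P s x * heat_kernel_deriv n \<tau> (x0 - x))) integrable_on UNIV"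
        by (intro integrable_on_mult_right integrable_mult_heat_kernel_deriv[OF P_continuous_on[OF s(1)]
            abs_P_le[OF s(1)] \<tau>])
      moreover have "?W integrable_on UNIV"
        by (rule integrable_mult_tail_kernel[OF P_continuous_on[OF s(1)] abs_P_le[OF s(1)] \<tau> R])
      moreover have "(\<lambda>x. P s x * ((-1) ^ n * heat_kernel_deriv n \<tau> (x0 - x) - tail_kernel_deriv x0 R \<tau> 0 n x)) =
          (\<lambda>x. (-1) ^ n * (P s x * heat_kernel_deriv n \<tau> (x0 - x)) - ?W x)"
        by (simp add: fun_eq_iff algebra_simps)
      ultimately show ?thesis
        unfolding kernel_pairing_def \<tau>_def[symmetric] by (simp add: integral_diff)
    qed
    also have "\<dots> = kernel_pairing x0 t0 s - (-1) ^ n * integral UNIV ?W"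
      by (simp add: algebra_simps flip: power_mult_distrib)
    finally have "\<bar>kernel_pairing x0 t0 s - cutoff_pairing x0 t0 R s\<bar> = \<bar>integral UNIV ?W\<bar>"
      by (simp add: abs_mult power_abs)
    also have "\<dots> \<le> M * K * tail_weight (Suc n) \<tau> R"
      using K[OF P_continuous_on[OF s(1)] abs_P_le[OF s(1)] \<tau> R] by simp
    finally show ?thesis
      by (simp add: \<tau>_def)
  qed
  then show thesis
    using that[of "M * K"] M_nonneg \<open>K \<ge> 0\<close> by simp
qed

lemma has_real_derivative_cutoff_pairing_Leibniz:
  assumes s: "0 < s" "s < t0"
  shows "(cutoff_pairing x0 t0 R has_real_derivative integral {x0 - R - 2..x0 + R + 2}
     (\<lambda>\<xi>. ut \<xi> s * kernel_test x0 R (t0 - s) \<xi> - u \<xi> s * (cutoff x0 R \<xi> * heat_kernel_deriv 2 (t0 - s) (x0 - \<xi>)))) (at s)"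
proof -
  define U where "U = {0<..<t0}"
  define f where "f r \<xi> = u \<xi> r * kernel_test x0 R (t0 - r) \<xi>" for r \<xi>
  define f' where "f' r \<xi> = ut \<xi> r * kernel_test x0 R (t0 - r) \<xi> -
    u \<xi> r * (cutoff x0 R \<xi> * heat_kernel_deriv 2 (t0 - r) (x0 - \<xi>))" for r \<xi>
  have U: "r \<in> U \<Longrightarrow> r > 0 \<and> t0 - r > 0" for r
    by (simp add: U_def)
  have "cutoff_pairing x0 t0 R r = integral (cbox (x0 - R - 2) (x0 + R + 2)) (f r)" for r
    unfolding cutoff_pairing_def f_def cbox_interval
  proof (rule integral_UNIV_eq_on_support)
    fix x :: real assume "x \<notin> {x0 - R - 2..x0 + R + 2}"
    then have "x \<notin> {x0 - R - 1..x0 + R + 1}" by auto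
    then show "u x r * kernel_test x0 R (t0 - r) x = 0"
      by (simp add: kernel_test_outside)
  qed
  then have eq: "cutoff_pairing x0 t0 R = (\<lambda>r. integral (cbox (x0 - R - 2) (x0 + R + 2)) (f r))"
    by (intro ext)
  have "((\<lambda>r. integral (cbox (x0 - R - 2) (x0 + R + 2)) (f r)) has_real_derivative
      integral (cbox (x0 - R - 2) (x0 + R + 2)) (f' s)) (at s within U)"
  proof (rule leibniz_rule_field_derivative)
    fix r \<xi> assume "r \<in> U"
    then have "((\<lambda>r. heat_kernel (t0 - r) (x0 - \<xi>)) has_real_derivative heat_kernel_deriv 2 (t0 - r) (x0 - \<xi>) * - 1) (at r)"
      using U by (intro DERIV_chain2[OF DERIV_heat_kernel_time]) (auto intro!: derivative_eq_intros)
    then have "((\<lambda>r. f r \<xi>) has_real_derivative f' r \<xi>) (at r)"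
      unfolding f_def f'_def kernel_test_def using U[OF \<open>r \<in> U\<close>]
      by (auto intro!: derivative_eq_intros ut simp: algebra_simps)
    then show "((\<lambda>r. f r \<xi>) has_real_derivative f' r \<xi>) (at r within U)"
      by (rule has_field_derivative_at_within)
  next
    fix r assume "r \<in> U"
    then have "continuous_on S (\<lambda>\<xi>. heat_kernel (t0 - r) (x0 - \<xi>))" for S
      using U heat_kernel_deriv_reflect_continuous_on[of "t0 - r" S 0 x0] heat_kernel_deriv_0 by simp
    then have "continuous_on (cbox (x0 - R - 2) (x0 + R + 2)) (f r)"
      unfolding f_def kernel_test_def using U \<open>r \<in> U\<close>
      by (intro continuous_intros u_slice_continuous_on cutoff_continuous_on) auto
    then show "f r integrable_on cbox (x0 - R - 2) (x0 + R + 2)"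
      by (rule integrable_continuous)
  next
    have U0: "U \<times> UNIV \<subseteq> {..<t0} \<times> UNIV" "U \<subseteq> {0<..}"
      by (auto simp: U_def)
    have "continuous_on (U \<times> UNIV) ((\<lambda>(x, t). ut x t) \<circ> (\<lambda>p. (snd p, fst p)))"
      "continuous_on (U \<times> UNIV) ((\<lambda>(x, t). u x t) \<circ> (\<lambda>p. (snd p, fst p)))"
      using U0(2)
      by (intro continuous_on_compose continuous_intros continuous_on_subset[OF ut_continuous]
          continuous_on_subset[OF u_continuous_on]; auto)+
    then have ut': "continuous_on (U \<times> UNIV) (\<lambda>p. ut (snd p) (fst p))"
      and u': "continuous_on (U \<times> UNIV) (\<lambda>p. u (snd p) (fst p))"
      by (simp_all add: o_def case_prod_unfold)
    have "continuous_on (U \<times> UNIV) ((\<lambda>p. heat_kernel (fst p) (snd p)) \<circ> (\<lambda>p. (t0 - fst p, x0 - snd p)))"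
      "continuous_on (U \<times> UNIV) ((\<lambda>p. heat_kernel_deriv 2 (fst p) (snd p)) \<circ> (\<lambda>p. (t0 - fst p, x0 - snd p)))"
      by (intro continuous_on_compose continuous_intros continuous_on_subset[OF heat_kernel_continuous_on]
          continuous_on_subset[OF heat_kernel_deriv_continuous_on]; auto simp: U_def)+
    then have hk: "continuous_on (U \<times> UNIV) (\<lambda>p. heat_kernel (t0 - fst p) (x0 - snd p))"
      "continuous_on (U \<times> UNIV) (\<lambda>p. heat_kernel_deriv 2 (t0 - fst p) (x0 - snd p))"
      by (simp_all add: o_def)
    have "continuous_on (U \<times> UNIV) (\<lambda>(r, \<xi>). f' r \<xi>)"
      unfolding f'_def kernel_test_def case_prod_unfold
      by (intro continuous_intros ut' u' hk continuous_on_compose2[OF cutoff_continuous_on[of UNIV]]) auto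
    then show "continuous_on (U \<times> cbox (x0 - R - 2) (x0 + R + 2)) (\<lambda>(r, \<xi>). f' r \<xi>)"
      by (rule continuous_on_subset) auto
  qed (use s in \<open>auto simp: U_def\<close>)
  moreover have "at s within U = at s"
    using s by (intro at_within_open) (auto simp: U_def)
  ultimately show ?thesis
    unfolding eq f'_def cbox_interval by (simp only:)
qed

text \<open>Differentiating the cut-off pairing in \<open>s\<close>, the heat equation and two integrations by parts
  leave only the defect of the test function, which lives where the cut-off is not \<open>1\<close>.\<close>

lemma has_real_derivative_cutoff_pairing:
  assumes s: "0 < s" "s < t0" and R: "R \<ge> 0"
  shows "(cutoff_pairing x0 t0 R has_real_derivative
    integral UNIV (\<lambda>\<xi>. u \<xi> s * heat_defect x0 R (t0 - s) \<xi>)) (at s)"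
proof -
  define \<tau> where "\<tau> = t0 - s"
  have \<tau>: "\<tau> > 0" using s by (simp add: \<tau>_def)
  let ?I = "\<lambda>f. integral {x0 - R - 2..x0 + R + 2} f"
  have hk: "continuous_on S (\<lambda>\<xi>. heat_kernel \<tau> (x0 - \<xi>))" for S
    using heat_kernel_deriv_reflect_continuous_on[OF \<tau>, of S 0 x0] heat_kernel_deriv_0[OF \<tau>] by simp
  have u: "continuous_on S (\<lambda>\<xi>. u \<xi> s)" "continuous_on S (\<lambda>\<xi>. ut \<xi> s)" for S
    by (rule u_slice_continuous_on[OF s(1)], rule continuous_on_slice[OF ut_continuous s(1)])
  have T: "continuous_on S (tail_kernel_deriv x0 R \<tau> 0 2)" for S
    by (rule has_derivs_continuous_on[OF has_derivs_tail_kernel[OF \<tau>]])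
  have i1: "(\<lambda>\<xi>. ut \<xi> s * kernel_test x0 R \<tau> \<xi>) integrable_on {x0 - R - 2..x0 + R + 2}"
    unfolding kernel_test_def
    by (intro integrable_continuous_interval continuous_intros u cutoff_continuous_on hk)
  have i2: "(\<lambda>\<xi>. u \<xi> s * (cutoff x0 R \<xi> * heat_kernel_deriv 2 \<tau> (x0 - \<xi>))) integrable_on {x0 - R - 2..x0 + R + 2}"
    by (intro integrable_continuous_interval continuous_intros u cutoff_continuous_on
        heat_kernel_deriv_reflect_continuous_on \<tau>)
  have i3: "(\<lambda>\<xi>. u \<xi> s * ((-1) ^ 2 * heat_kernel_deriv 2 \<tau> (x0 - \<xi>) - tail_kernel_deriv x0 R \<tau> 0 2 \<xi>))
      integrable_on {x0 - R - 2..x0 + R + 2}"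
    by (intro integrable_continuous_interval continuous_intros u T heat_kernel_deriv_reflect_continuous_on \<tau>)
  have "?I (\<lambda>\<xi>. ut \<xi> s * kernel_test x0 R \<tau> \<xi> - u \<xi> s * (cutoff x0 R \<xi> * heat_kernel_deriv 2 \<tau> (x0 - \<xi>))) =
      ?I (\<lambda>\<xi>. ut \<xi> s * kernel_test x0 R \<tau> \<xi>) - ?I (\<lambda>\<xi>. u \<xi> s * (cutoff x0 R \<xi> * heat_kernel_deriv 2 \<tau> (x0 - \<xi>)))"
    by (rule integral_diff[OF i1 i2])
  also have "?I (\<lambda>\<xi>. ut \<xi> s * kernel_test x0 R \<tau> \<xi>) = ?I (\<lambda>\<xi>. uxx \<xi> s * kernel_test x0 R \<tau> \<xi>)"
    using heat[OF s(1)] by (intro integral_cong) (simp add: algebra_simps)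
  also have "\<dots> = ?I (\<lambda>\<xi>. u \<xi> s * ((-1) ^ 2 * heat_kernel_deriv 2 \<tau> (x0 - \<xi>) - tail_kernel_deriv x0 R \<tau> 0 2 \<xi>))"
    using R
    by (intro integral_by_parts_twice[where c = "x0 - R - 1" and d = "x0 + R + 1", OF ux[OF s(1)] uxx[OF s(1)]
        continuous_on_slice[OF uxx_continuous s(1)] has_derivs_kernel_test[OF \<tau>] kernel_test_outside]) auto
  also have "\<dots> - ?I (\<lambda>\<xi>. u \<xi> s * (cutoff x0 R \<xi> * heat_kernel_deriv 2 \<tau> (x0 - \<xi>))) =
      ?I (\<lambda>\<xi>. u \<xi> s * ((-1) ^ 2 * heat_kernel_deriv 2 \<tau> (x0 - \<xi>) - tail_kernel_deriv x0 R \<tau> 0 2 \<xi>) -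
        u \<xi> s * (cutoff x0 R \<xi> * heat_kernel_deriv 2 \<tau> (x0 - \<xi>)))"
    by (rule integral_diff[OF i3 i2, symmetric])
  also have "\<dots> = ?I (\<lambda>\<xi>. u \<xi> s * heat_defect x0 R \<tau> \<xi>)"
    unfolding heat_defect_eq by (simp only: right_diff_distrib)
  also have "\<dots> = integral UNIV (\<lambda>\<xi>. u \<xi> s * heat_defect x0 R \<tau> \<xi>)"
  proof (rule integral_UNIV_eq_on_support[symmetric])
    fix x :: real assume "x \<notin> {x0 - R - 2..x0 + R + 2}"
    then have "x \<notin> {x0 - R - 1..x0 + R + 1}" by auto
    then show "u x s * heat_defect x0 R \<tau> x = 0"
      by (simp add: heat_defect_outside)
  qed
  finally show ?thesis
    using has_real_derivative_cutoff_pairing_Leibniz[OF s, of x0 R] unfolding \<tau>_def by simp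
qed

lemma cutoff_pairing_deriv_bound:
  obtains C where "C \<ge> 0" "\<And>x0 t0 R s. 0 < s \<Longrightarrow> s < t0 \<Longrightarrow> R \<ge> 0 \<Longrightarrow>
    \<bar>integral UNIV (\<lambda>\<xi>. u \<xi> s * heat_defect x0 R (t0 - s) \<xi>)\<bar> \<le> C * tail_weight (n + 3) (t0 - s) R"
proof -
  obtain K1 where "K1 \<ge> 0" and K1: "\<And>F M c R \<tau>. continuous_on UNIV F \<Longrightarrow> (\<And>x. \<bar>F x\<bar> \<le> M) \<Longrightarrow> \<tau> > 0 \<Longrightarrow> R \<ge> 0 \<Longrightarrow>
      \<bar>integral UNIV (\<lambda>x. F x * tail_kernel_deriv c R \<tau> 2 n x)\<bar> \<le> M * K1 * tail_weight (Suc (2 + n)) \<tau> R"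
    using integral_mult_tail_kernel_bound[where k = 2 and j = n] by blast
  obtain K2 where "K2 \<ge> 0" and K2: "\<And>F M c R \<tau>. continuous_on UNIV F \<Longrightarrow> (\<And>x. \<bar>F x\<bar> \<le> M) \<Longrightarrow> \<tau> > 0 \<Longrightarrow> R \<ge> 0 \<Longrightarrow>
      \<bar>integral UNIV (\<lambda>x. F x * tail_kernel_deriv c R \<tau> 0 (n + 2) x)\<bar> \<le> M * K2 * tail_weight (Suc (0 + (n + 2))) \<tau> R"
    using integral_mult_tail_kernel_bound[where k = 0 and j = "n + 2"] by blast
  have "\<bar>integral UNIV (\<lambda>\<xi>. u \<xi> s * heat_defect x0 R (t0 - s) \<xi>)\<bar> \<le> M * (K1 + K2) * tail_weight (n + 3) (t0 - s) R"
    if s: "0 < s" "s < t0" and R: "R \<ge> 0" for x0 t0 R s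
  proof -
    define \<tau> where "\<tau> = t0 - s"
    have \<tau>: "\<tau> > 0" using s by (simp add: \<tau>_def)
    let ?W1 = "\<lambda>x. P s x * tail_kernel_deriv x0 R \<tau> 2 n x"
    let ?W2 = "\<lambda>x. P s x * tail_kernel_deriv x0 R \<tau> 0 (n + 2) x"
    note P = P_continuous_on[OF s(1)] abs_P_le[OF s(1)]
    have "integral UNIV (\<lambda>\<xi>. u \<xi> s * heat_defect x0 R \<tau> \<xi>) =
        (-1) ^ n * integral UNIV (\<lambda>x. P s x * (tail_kernel_deriv x0 R \<tau> 2 n x - tail_kernel_deriv x0 R \<tau> 0 (n + 2) x))"
      by (rule integral_u_mult_test[OF s(1) has_derivs_heat_defect[OF \<tau>] test_fun_heat_defect[OF \<tau>]])
    also have "integral UNIV (\<lambda>x. P s x * (tail_kernel_deriv x0 R \<tau> 2 n x - tail_kernel_deriv x0 R \<tau> 0 (n + 2) x)) =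
        integral UNIV ?W1 - integral UNIV ?W2"
      using integral_diff[OF integrable_mult_tail_kernel[OF P \<tau> R] integrable_mult_tail_kernel[OF P \<tau> R]]
      by (simp add: algebra_simps)
    finally have "\<bar>integral UNIV (\<lambda>\<xi>. u \<xi> s * heat_defect x0 R \<tau> \<xi>)\<bar> \<le> \<bar>integral UNIV ?W1\<bar> + \<bar>integral UNIV ?W2\<bar>"
      by (simp add: abs_mult power_abs abs_triangle_ineq4)
    also have "\<dots> \<le> M * K1 * tail_weight (n + 3) \<tau> R + M * K2 * tail_weight (n + 3) \<tau> R"
      using K1[OF P \<tau> R] K2[OF P \<tau> R] by (intro add_mono) (simp_all add: numeral_3_eq_3)
    finally show ?thesis
      by (simp add: \<tau>_def algebra_simps)
  qed
  then show thesis
    using that[of "M * (K1 + K2)"] M_nonneg \<open>K1 \<ge> 0\<close> \<open>K2 \<ge> 0\<close> by simp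
qed

text \<open>Both error terms decay like \<open>exp (- R\<^sup>2 / (16 * (t0 - s)))\<close> as \<open>R \<rightarrow> \<infinity>\<close>, uniformly for
  \<open>s \<in> [s1, s2]\<close>, while \<open>kernel_pairing\<close> does not depend on \<open>R\<close>.\<close>

lemma kernel_pairing_eq:
  assumes s: "0 < s1" "s1 < s2" "s2 < t0"
  shows "kernel_pairing x0 t0 s1 = kernel_pairing x0 t0 s2"
proof -
  obtain C1 where "C1 \<ge> 0" and C1: "\<And>x0 t0 R s. 0 < s \<Longrightarrow> s < t0 \<Longrightarrow> R \<ge> 0 \<Longrightarrow>
      \<bar>kernel_pairing x0 t0 s - cutoff_pairing x0 t0 R s\<bar> \<le> C1 * tail_weight (Suc n) (t0 - s) R"
    using kernel_pairing_cutoff_pairing_close by blast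
  obtain C2 where "C2 \<ge> 0" and C2: "\<And>x0 t0 R s. 0 < s \<Longrightarrow> s < t0 \<Longrightarrow> R \<ge> 0 \<Longrightarrow>
      \<bar>integral UNIV (\<lambda>\<xi>. u \<xi> s * heat_defect x0 R (t0 - s) \<xi>)\<bar> \<le> C2 * tail_weight (n + 3) (t0 - s) R"
    using cutoff_pairing_deriv_bound by blast
  define \<alpha> where "\<alpha> = t0 - s2"
  define \<beta> where "\<beta> = t0 - s1"
  have \<alpha>\<beta>: "0 < \<alpha>" "\<alpha> \<le> t0 - s" "t0 - s \<le> \<beta>" if "s1 \<le> s" "s \<le> s2" for s
    using that s by (auto simp: \<alpha>_def \<beta>_def)
  define A1 where "A1 = C1 * ((1 + 1 / \<alpha>) ^ Suc n * sqrt (pi * (16 * \<beta>)))"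
  define A2 where "A2 = C2 * ((1 + 1 / \<alpha>) ^ (n + 3) * sqrt (pi * (16 * \<beta>)))"
  have E1: "\<bar>kernel_pairing x0 t0 s - cutoff_pairing x0 t0 R s\<bar> \<le> A1 * exp (- R\<^sup>2 / (16 * \<beta>))"
    if "s1 \<le> s" "s \<le> s2" "R \<ge> 0" for s R
  proof -
    have "\<bar>kernel_pairing x0 t0 s - cutoff_pairing x0 t0 R s\<bar> \<le> C1 * tail_weight (Suc n) (t0 - s) R"
      using that s by (intro C1) auto
    also have "\<dots> \<le> C1 * ((1 + 1 / \<alpha>) ^ Suc n * sqrt (pi * (16 * \<beta>)) * exp (- R\<^sup>2 / (16 * \<beta>)))"
      using \<open>C1 \<ge> 0\<close> by (intro mult_left_mono tail_weight_le \<alpha>\<beta>[OF that(1,2)])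
    finally show ?thesis
      by (simp add: A1_def mult.assoc)
  qed
  have E2: "\<bar>cutoff_pairing x0 t0 R s1 - cutoff_pairing x0 t0 R s2\<bar> \<le> A2 * exp (- R\<^sup>2 / (16 * \<beta>)) * \<bar>s1 - s2\<bar>"
    if "R \<ge> 0" for R
  proof (rule field_differentiable_bound[where S = "{s1..s2}", unfolded real_norm_def])
    fix s assume "s \<in> {s1..s2}"
    then have s': "0 < s" "s < t0" "s1 \<le> s" "s \<le> s2"
      using s by auto
    show "(cutoff_pairing x0 t0 R has_field_derivative integral UNIV (\<lambda>\<xi>. u \<xi> s * heat_defect x0 R (t0 - s) \<xi>))
        (at s within {s1..s2})"
      by (rule has_field_derivative_at_within[OF has_real_derivative_cutoff_pairing[OF s'(1,2) that]])
    have "\<bar>integral UNIV (\<lambda>\<xi>. u \<xi> s * heat_defect x0 R (t0 - s) \<xi>)\<bar> \<le> C2 * tail_weight (n + 3) (t0 - s) R"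
      by (rule C2[OF s'(1,2) that])
    also have "\<dots> \<le> C2 * ((1 + 1 / \<alpha>) ^ (n + 3) * sqrt (pi * (16 * \<beta>)) * exp (- R\<^sup>2 / (16 * \<beta>)))"
      using \<open>C2 \<ge> 0\<close> by (intro mult_left_mono tail_weight_le \<alpha>\<beta>[OF s'(3,4)])
    finally show "\<bar>integral UNIV (\<lambda>\<xi>. u \<xi> s * heat_defect x0 R (t0 - s) \<xi>)\<bar> \<le> A2 * exp (- R\<^sup>2 / (16 * \<beta>))"
      by (simp add: A2_def mult.assoc)
  qed (use s in simp_all)
  have "\<bar>kernel_pairing x0 t0 s1 - kernel_pairing x0 t0 s2\<bar> \<le> (2 * A1 + A2 * \<bar>s1 - s2\<bar>) * exp (- R\<^sup>2 / (16 * \<beta>))"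
    if "R \<ge> 0" for R
  proof -
    have "\<bar>kernel_pairing x0 t0 s1 - kernel_pairing x0 t0 s2\<bar> \<le> \<bar>kernel_pairing x0 t0 s1 - cutoff_pairing x0 t0 R s1\<bar> +
        \<bar>cutoff_pairing x0 t0 R s1 - cutoff_pairing x0 t0 R s2\<bar> + \<bar>kernel_pairing x0 t0 s2 - cutoff_pairing x0 t0 R s2\<bar>"
      by linarith
    also have "\<dots> \<le> A1 * exp (- R\<^sup>2 / (16 * \<beta>)) + A2 * exp (- R\<^sup>2 / (16 * \<beta>)) * \<bar>s1 - s2\<bar> + A1 * exp (- R\<^sup>2 / (16 * \<beta>))"
      using s that by (intro add_mono E1 E2) auto
    finally show ?thesis
      by (simp add: algebra_simps)
  qed
  then have "kernel_pairing x0 t0 s1 - kernel_pairing x0 t0 s2 = 0"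
    using s by (intro zero_if_abs_le_gauss_tail[where a = "16 * \<beta>"]) (auto simp: \<beta>_def)
  then show ?thesis by simp
qed

lemma cutoff_pairing_tendsto:
  assumes t0: "t0 > 0"
  shows "(cutoff_pairing x0 t0 1 \<longlongrightarrow> u x0 t0) (at_left t0)"
proof -
  define w where "w \<xi> s = u \<xi> s * cutoff x0 1 \<xi>" for \<xi> s
  have "continuous_on (UNIV \<times> {0<..}) (\<lambda>p. u (fst p) (snd p) * cutoff x0 1 (fst p))"
    using u_continuous_on unfolding case_prod_unfold
    by (intro continuous_intros continuous_on_compose2[OF cutoff_continuous_on[of UNIV]]) auto
  then have w: "continuous_on (UNIV \<times> {0<..}) (\<lambda>(\<xi>, s). w \<xi> s)"
    by (simp add: w_def case_prod_unfold)
  define K where "K = cbox (x0 - 2, t0 / 2) (x0 + 2, t0)"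
  have "compact K"
    unfolding K_def by (rule compact_cbox)
  moreover have "K \<subseteq> UNIV \<times> {0<..}"
    using t0 by (auto simp: K_def cbox_Pair_eq)
  ultimately obtain B where B: "\<And>q. q \<in> K \<Longrightarrow> norm ((\<lambda>(\<xi>, s). w \<xi> s) q) \<le> B"
    using continuous_on_compact_bound[OF _ continuous_on_subset[OF w]] by metis
  have "\<bar>w \<xi> s\<bar> \<le> B" if "t0 / 2 \<le> s" "s \<le> t0" for \<xi> s
  proof (cases "\<bar>\<xi> - x0\<bar> \<ge> 1 + 1")
    case True
    then show ?thesis
      using B[of "(x0, t0)"] t0 by (force simp: w_def cutoff_outer K_def cbox_Pair_eq)
  next
    case False
    then have "(\<xi>, s) \<in> K"
      using that by (auto simp: K_def cbox_Pair_eq)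
    then show ?thesis
      using B by fastforce
  qed
  from tendsto_integral_mult_heat_kernel[OF w this t0, of x0]
  have "((\<lambda>s. integral UNIV (\<lambda>\<xi>. w \<xi> s * heat_kernel (t0 - s) (x0 - \<xi>))) \<longlongrightarrow> w x0 t0) (at_left t0)" .
  moreover have "w x0 t0 = u x0 t0"
    by (simp add: w_def cutoff_inner)
  moreover have "(\<lambda>s. integral UNIV (\<lambda>\<xi>. w \<xi> s * heat_kernel (t0 - s) (x0 - \<xi>))) = cutoff_pairing x0 t0 1"
    by (simp add: fun_eq_iff w_def cutoff_pairing_def kernel_test_def mult_ac)
  ultimately show ?thesis by simp
qed

lemma kernel_pairing_tendsto:
  assumes t0: "t0 > 0"
  shows "(kernel_pairing x0 t0 \<longlongrightarrow> u x0 t0) (at_left t0)"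
proof -
  obtain C where "C \<ge> 0" and C: "\<And>x0 t0 R s. 0 < s \<Longrightarrow> s < t0 \<Longrightarrow> R \<ge> 0 \<Longrightarrow>
      \<bar>kernel_pairing x0 t0 s - cutoff_pairing x0 t0 R s\<bar> \<le> C * tail_weight (Suc n) (t0 - s) R"
    using kernel_pairing_cutoff_pairing_close by blast
  have "eventually (\<lambda>s. norm (kernel_pairing x0 t0 s - cutoff_pairing x0 t0 1 s) \<le> C * tail_weight (Suc n) (t0 - s) 1)
      (at_left t0)"
    unfolding eventually_at_left_field
  proof (intro exI[of _ 0] conjI allI impI)
    fix s :: real
    assume "0 < s" "s < t0"
    then show "norm (kernel_pairing x0 t0 s - cutoff_pairing x0 t0 1 s) \<le> C * tail_weight (Suc n) (t0 - s) 1"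
      using C[of s t0 1 x0] by simp
  qed (rule t0)
  moreover have "((\<lambda>s. C * tail_weight (Suc n) (t0 - s) 1) \<longlongrightarrow> 0) (at_left t0)"
    by (intro tendsto_mult_right_zero tail_weight_tendsto_0) simp
  ultimately have "((\<lambda>s. kernel_pairing x0 t0 s - cutoff_pairing x0 t0 1 s) \<longlongrightarrow> 0) (at_left t0)"
    by (rule Lim_null_comparison)
  from tendsto_add[OF this cutoff_pairing_tendsto[OF t0, of x0]] show ?thesis
    by simp
qed

lemma kernel_pairing_tendsto_initial:
  assumes t0: "t0 > 0"
  shows "(kernel_pairing x0 t0 \<longlongrightarrow> integral UNIV (\<lambda>\<xi>. G \<xi> * heat_kernel_deriv n t0 (x0 - \<xi>))) (at_right 0)"
proof -
  obtain BG where BG: "\<And>x. \<bar>G x\<bar> \<le> BG"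
    using Bc_bounded[OF initial_Bc] by blast
  have G: "continuous_on UNIV G"
    using initial_Bc by (simp add: Bc_def)
  obtain C where "C \<ge> 0" and C: "\<And>\<tau> y. \<tau> > 0 \<Longrightarrow>
      \<bar>heat_kernel_deriv n \<tau> y\<bar> \<le> C * (1 / sqrt \<tau>) ^ Suc n * exp (- y\<^sup>2 / (8 * \<tau>))"
    using heat_kernel_deriv_bound[where k = n] by blast
  define E where "E s = Acn_norm (\<lambda>x. P s x - G x) * (C * (1 / sqrt (t0 - s)) ^ Suc n) * sqrt (pi * (8 * (t0 - s)))"
    for s
  have "(E \<longlongrightarrow> 0 * (C * (1 / sqrt (t0 - 0)) ^ Suc n) * sqrt (pi * (8 * (t0 - 0)))) (at_right 0)"
    unfolding E_def by (intro tendsto_intros initial) (use t0 in auto)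
  then have E: "(E \<longlongrightarrow> 0) (at_right 0)"
    by simp
  have "eventually (\<lambda>s. norm (kernel_pairing x0 t0 s - integral UNIV (\<lambda>\<xi>. G \<xi> * heat_kernel_deriv n (t0 - s) (x0 - \<xi>)))
      \<le> E s) (at_right 0)"
    unfolding eventually_at_right_field
  proof (intro exI[of _ t0] conjI allI impI)
    fix s :: real
    assume s: "0 < s" "s < t0"
    then have \<tau>: "t0 - s > 0" by simp
    have PG: "continuous_on UNIV (\<lambda>x. P s x - G x)"
      using P_continuous_on G s by (intro continuous_intros) auto
    have "kernel_pairing x0 t0 s - integral UNIV (\<lambda>\<xi>. G \<xi> * heat_kernel_deriv n (t0 - s) (x0 - \<xi>)) =
        integral UNIV (\<lambda>\<xi>. (P s \<xi> - G \<xi>) * heat_kernel_deriv n (t0 - s) (x0 - \<xi>))"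
      unfolding kernel_pairing_def
      using integral_diff[OF integrable_mult_heat_kernel_deriv[OF P_continuous_on abs_P_le \<tau>]
          integrable_mult_heat_kernel_deriv[OF G BG \<tau>]] s
      by (simp add: algebra_simps)
    also have "\<bar>\<dots>\<bar> \<le> E s"
    proof -
      have "\<bar>heat_kernel_deriv n (t0 - s) (x0 - \<xi>)\<bar> \<le>
          (C * (1 / sqrt (t0 - s)) ^ Suc n) * exp (- (x0 - \<xi>)\<^sup>2 / (8 * (t0 - s)))" for \<xi>
        by (rule C[OF \<tau>])
      from gauss_dominated_product(2)[OF PG abs_P_minus_initial_le[OF s(1)]
          heat_kernel_deriv_reflect_continuous_on[OF \<tau>] this] \<tau>
      show ?thesis
        unfolding E_def by simp
    qed
    finally show "norm (kernel_pairing x0 t0 s - integral UNIV (\<lambda>\<xi>. G \<xi> * heat_kernel_deriv n (t0 - s) (x0 - \<xi>)))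
        \<le> E s" by simp
  qed (rule t0)
  then have "((\<lambda>s. kernel_pairing x0 t0 s - integral UNIV (\<lambda>\<xi>. G \<xi> * heat_kernel_deriv n (t0 - s) (x0 - \<xi>)))
      \<longlongrightarrow> 0) (at_right 0)"
    using E by (rule Lim_null_comparison)
  from tendsto_add[OF this tendsto_integral_mult_heat_kernel_deriv[OF G BG t0, where k = n and c = x0]]
  show ?thesis
    by simp
qed

lemma u_eq_integral_initial:
  assumes t0: "t0 > 0"
  shows "u x0 t0 = integral UNIV (\<lambda>\<xi>. G \<xi> * heat_kernel_deriv n t0 (x0 - \<xi>))"
proof -
  define c where "c = kernel_pairing x0 t0 (t0 / 2)"
  have const: "kernel_pairing x0 t0 s = c" if "0 < s" "s < t0" for s
  proof -
    consider "s < t0 / 2" | "s = t0 / 2" | "t0 / 2 < s" by linarith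
    then show ?thesis
    proof cases
      case 1
      then show ?thesis
        unfolding c_def using that by (intro kernel_pairing_eq) auto
    next
      case 2
      then show ?thesis
        unfolding c_def by (rule arg_cong)
    next
      case 3
      then show ?thesis
        unfolding c_def using that t0 by (intro kernel_pairing_eq[symmetric]) auto
    qed
  qed
  have "eventually (\<lambda>s. kernel_pairing x0 t0 s = c) (at_left t0)"
    unfolding eventually_at_left_field using t0 const by blast
  then have "u x0 t0 = c"
    using tendsto_unique[OF _ kernel_pairing_tendsto[OF t0] tendsto_eventually] by simp
  moreover have "eventually (\<lambda>s. kernel_pairing x0 t0 s = c) (at_right 0)"
    unfolding eventually_at_right_field using t0 const by blast
  then have "integral UNIV (\<lambda>\<xi>. G \<xi> * heat_kernel_deriv n t0 (x0 - \<xi>)) = c"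
    using tendsto_unique[OF _ kernel_pairing_tendsto_initial[OF t0] tendsto_eventually] by simp
  ultimately show ?thesis by simp
qed

end

theorem theorem6p5:
  fixes n :: nat
    and u ux uxx ut :: "real \<Rightarrow> real \<Rightarrow> real"
    and P :: "real \<Rightarrow> real \<Rightarrow> real"
    and G :: "real \<Rightarrow> real"
  assumes n2: "n \<ge> 2"
    and ux: "\<And>x t. t > 0 \<Longrightarrow> ((\<lambda>y. u y t) has_real_derivative ux x t) (at x)"
    and uxx: "\<And>x t. t > 0 \<Longrightarrow> ((\<lambda>y. ux y t) has_real_derivative uxx x t) (at x)"
    and ut: "\<And>x t. t > 0 \<Longrightarrow> ((\<lambda>s. u x s) has_real_derivative ut x t) (at t)"
    and cont: "continuous_on (UNIV \<times> {0<..}) (\<lambda>(x, t). ux x t)"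
              "continuous_on (UNIV \<times> {0<..}) (\<lambda>(x, t). uxx x t)"
              "continuous_on (UNIV \<times> {0<..}) (\<lambda>(x, t). ut x t)"
    and heat: "\<And>x t. t > 0 \<Longrightarrow> ut x t - uxx x t = 0"
    and prim: "\<And>t. t > 0 \<Longrightarrow> Bc (P t) \<and> distr_deriv n (P t) (\<lambda>x. u x t)"
    and bdd: "\<exists>M. \<forall>t > 0. Acn_norm (P t) \<le> M"
    and f: "Bc G"
    and init: "((\<lambda>t. Acn_norm (\<lambda>x. P t x - G x)) \<longlongrightarrow> 0) (at_right 0)"
  shows "\<forall>x. \<forall>t > 0. u x t = heat_conv n G t x"
proof -
  obtain M where "\<And>t. t > 0 \<Longrightarrow> Acn_norm (P t) \<le> M"
    using bdd by blast
  then interpret heat_solution n u ux uxx ut P G M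
    using ux uxx ut cont heat prim f init by unfold_locales
  show ?thesis
    using u_eq_integral_initial heat_conv_eq_integral n2 by simp
qed

end
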